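(* Let $p$ be a prime and let $k,A\in\mathbb{Z}$. Consider the residue classes $\bar B\in\mathbb{Z}/p^2\mathbb{Z}$ such that $p\mid \mathrm{ind}(x^3+kx^2+Ax+B)$ for the lifts $B\in\mathbb{Z}$ of $\bar B$ (with nonzero discriminant). The number of such $\bar B$ is determined by the residue classes of $k$ and $A$ in $\mathbb{Z}/p\mathbb{Z}$, and in fact equals the number of roots in $\mathbb{Z}/p\mathbb{Z}$ of $3x^2+2kx+A$.
   Context: For a monic polynomial $f\in\mathbb{Z}[x]$ with nonzero discriminant, $\mathrm{ind}(f)$ denotes the index of $\mathbb{Z}[x]/(f)$ in the ring of integral elements of $\mathbb{Q}[x]/(f)$ (its integral closure). *)

theory Defs
  imports "HOL-Computational_Algebra.Computational_Algebra" "HOL-Number_Theory.Cong"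
begin

text \<open>Elements of Q[x]/(f) are represented by rational polynomials of degree < deg f.\<close>

definition integral_in_quot :: "int poly \<Rightarrow> rat poly \<Rightarrow> bool" where
  "integral_in_quot f g \<longleftrightarrow>
     (\<exists>h :: int poly. lead_coeff h = 1 \<and> map_poly of_int f dvd pcompose (map_poly of_int h) g)"

definition int_closure :: "int poly \<Rightarrow> rat poly set" where
  "int_closure f = {g. degree g < degree f \<and> integral_in_quot f g}"

text \<open>Z[x]/(f) inside Q[x]/(f): representatives with integer coefficients.\<close>
definition int_coeffs :: "rat poly \<Rightarrow> bool" where
  "int_coeffs g \<longleftrightarrow> (\<forall>i. coeff g i \<in> \<int>)"

text \<open>ind(f): the index of Z[x]/(f) in its integral closure, i.e. the number of cosets.\<close>
definition ind :: "int poly \<Rightarrow> nat" where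
  "ind f = card ((\<lambda>g. {g' \<in> int_closure f. int_coeffs (g - g')}) ` int_closure f)"

definition cubic_disc :: "int \<Rightarrow> int \<Rightarrow> int \<Rightarrow> int" where
  "cubic_disc k A B = k^2*A^2 - 4*A^3 - 4*k^3*B - 27*B^2 + 18*k*A*B"

end

(* Let f = x^3 + k x^2 + A x + B have nonzero discriminant and complex roots a1, a2, a3.  A rational
   polynomial g of degree < 3 represents an integral element of Q[x]/(f) iff the g(ai) are algebraic
   integers, so ind(f) is the index of Z[x] in this additive group of representatives.

   The index is divisible by p iff f has a root r with p^2 | f(r) and p | f'(r) (Dedekind's criterion
   for cubics).  If there is such an r, then ((x - r)^2 + f''(r)/2 (x - r))/p is integral and has
   order p modulo Z[x].  If there is none, every integer polynomial v of degree < 3 with v/p integral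
   is divisible by p: such v are nilpotent modulo (f, p), and a monic linear or quadratic one would
   produce such an r.  As disc(f) g has integer coefficients for every integral g, the index then
   divides m^3, where m is the prime-to-p part of disc(f).

   The criterion depends only on B mod p^2, and x -> -(x^3 + k x^2 + A x) mod p^2 maps the roots of
   3x^2 + 2kx + A mod p bijectively onto the classes of B satisfying it. *)

theory Submission
  imports Defs "Jordan_Normal_Form.Char_Poly"
begin

section \<open>Algebraic integers form a ring\<close>

definition int_span :: "(nat \<Rightarrow> 'a::comm_ring_1) \<Rightarrow> nat \<Rightarrow> 'a set" where
  "int_span w n = range (\<lambda>c. \<Sum>j<n. of_int (c j) * w j)"

lemma int_span_eqI: "x = (\<Sum>j<n. of_int (c j) * w j) \<Longrightarrow> x \<in> int_span w n"
  unfolding int_span_def by (rule range_eqI)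

lemma int_span_add:
  assumes "x \<in> int_span w n" "y \<in> int_span w n"
  shows "x + y \<in> int_span w n"
proof -
  obtain c d where "x = (\<Sum>j<n. of_int (c j) * w j)" "y = (\<Sum>j<n. of_int (d j) * w j)"
    using assms unfolding int_span_def by blast
  then have "x + y = (\<Sum>j<n. of_int (c j + d j) * w j)"
    by (simp add: sum.distrib distrib_right)
  then show ?thesis by (rule int_span_eqI)
qed

lemma int_span_int_mult:
  assumes "x \<in> int_span w n"
  shows "of_int c * x \<in> int_span w n"
proof -
  obtain d where "x = (\<Sum>j<n. of_int (d j) * w j)"
    using assms unfolding int_span_def by blast
  then have "of_int c * x = (\<Sum>j<n. of_int (c * d j) * w j)"
    by (simp add: sum_distrib_left mult.assoc)
  then show ?thesis by (rule int_span_eqI)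
qed

lemma int_span_sum:
  assumes "\<And>i. i \<in> S \<Longrightarrow> f i \<in> int_span w n"
  shows "sum f S \<in> int_span w n"
proof -
  have "0 \<in> int_span w n" by (rule int_span_eqI[where c = "\<lambda>_. 0"]) simp
  with assms show ?thesis
    by (induction S rule: infinite_finite_induct) (simp_all add: int_span_add)
qed

lemma int_span_generator:
  assumes "i < n"
  shows "w i \<in> int_span w n"
proof (rule int_span_eqI)
  have "(\<Sum>j<n. of_int (if j = i then 1 else 0) * w j) = (\<Sum>j<n. if j = i then w j else 0)"
    by (intro sum.cong) auto
  then show "w i = (\<Sum>j<n. of_int (if j = i then 1 else 0) * w j)" using assms by simp
qed

lemma int_span_mult:
  assumes "\<forall>i<n. z * w i \<in> int_span w n" and "x \<in> int_span w n"
  shows "z * x \<in> int_span w n"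
proof -
  obtain c where "x = (\<Sum>j<n. of_int (c j) * w j)"
    using assms(2) unfolding int_span_def by blast
  then have "z * x = (\<Sum>j<n. of_int (c j) * (z * w j))"
    by (simp add: sum_distrib_left mult_ac)
  also have "\<dots> \<in> int_span w n"
    using assms(1) by (intro int_span_sum int_span_int_mult) auto
  finally show ?thesis .
qed

text \<open>\<open>z\<close> is an eigenvalue of the integer matrix of multiplication by \<open>z\<close> on the family \<open>w\<close>.\<close>
lemma algebraic_int_if_int_span_stable:
  fixes z :: "'a::field_char_0"
  assumes "i0 < n" "w i0 \<noteq> 0" and stable: "\<forall>i<n. z * w i \<in> int_span w n"
  shows "algebraic_int z"
proof -
  have "\<forall>i<n. \<exists>c. z * w i = (\<Sum>j<n. of_int (c j) * w j)"
    using stable unfolding int_span_def by blast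
  then obtain M where M: "\<forall>i<n. z * w i = (\<Sum>j<n. of_int (M i j) * w j)"
    by metis
  define M' :: "int mat" where "M' = mat n n (\<lambda>(i, j). M i j)"
  define C :: "'a mat" where "C = map_mat of_int M'"
  have M': "M' \<in> carrier_mat n n" unfolding M'_def by simp
  then have C: "C \<in> carrier_mat n n" unfolding C_def by simp
  have "eigenvector C (vec n w) z" unfolding eigenvector_def
  proof (intro conjI)
    show "vec n w \<in> carrier_vec (dim_row C)" using C by simp
    show "vec n w \<noteq> 0\<^sub>v (dim_row C)"
      using C assms(1,2) by (metis carrier_matD(1) index_vec index_zero_vec(1))
    show "C *\<^sub>v vec n w = z \<cdot>\<^sub>v vec n w"
    proof (rule eq_vecI)
      fix i assume "i < dim_vec (z \<cdot>\<^sub>v vec n w)"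
      then have i: "i < n" by simp
      have "(C *\<^sub>v vec n w) $ i = row C i \<bullet> vec n w" using C i by simp
      also have "\<dots> = (\<Sum>j<n. of_int (M i j) * w j)"
        unfolding scalar_prod_def using C i by (auto simp: C_def M'_def lessThan_atLeast0 intro!: sum.cong)
      finally have "(C *\<^sub>v vec n w) $ i = (\<Sum>j<n. of_int (M i j) * w j)" .
      then show "(C *\<^sub>v vec n w) $ i = (z \<cdot>\<^sub>v vec n w) $ i" using M i by simp
    qed (use C in simp)
  qed
  then have "poly (char_poly C) z = 0"
    using eigenvalue_root_char_poly[OF C] unfolding eigenvalue_def by blast
  moreover have "char_poly C = of_int_poly (char_poly M')"
    unfolding C_def by (rule of_int_hom.char_poly_hom[OF M'])
  moreover have "monic (char_poly M')"
    using degree_monic_char_poly[OF M'] by simp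
  ultimately show ?thesis unfolding algebraic_int_altdef_ipoly by auto
qed

lemma algebraic_int_monic_poly:
  assumes "algebraic_int (x::'a::field_char_0)"
  obtains P where "monic P" "poly (of_int_poly P) x = 0" "degree P > 0"
proof -
  from assms obtain P where P: "poly (of_int_poly P) x = 0" "monic P"
    unfolding algebraic_int_altdef_ipoly by auto
  then have "degree P > 0" using monic_degree_0 by fastforce
  with P that show ?thesis by blast
qed

lemma monic_root_power_degree:
  fixes x :: "'a::field_char_0"
  assumes "monic P" "poly (of_int_poly P) x = 0"
  shows "x ^ degree P = - (\<Sum>a<degree P. of_int (coeff P a) * x ^ a)"
proof -
  have "0 = (\<Sum>a\<le>degree P. of_int (coeff P a) * x ^ a)"
    using assms(2) by (simp add: poly_altdef)
  also have "\<dots> = (\<Sum>a<degree P. of_int (coeff P a) * x ^ a) + x ^ degree P"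
    using assms(1) by (simp add: lessThan_Suc_atMost[symmetric])
  finally show ?thesis by (simp add: eq_neg_iff_add_eq_0 add.commute)
qed

lemma monomial_in_int_span:
  fixes x y :: "'a::field_char_0"
  assumes P: "monic P" "poly (of_int_poly P) x = 0" and Q: "monic Q" "poly (of_int_poly Q) y = 0"
    and ab: "a \<le> degree P" "b \<le> degree Q" "a < degree P \<or> b < degree Q"
  defines "w \<equiv> \<lambda>i. x ^ (i div degree Q) * y ^ (i mod degree Q)"
  shows "x ^ a * y ^ b \<in> int_span w (degree P * degree Q)"
proof -
  define m n where "m = degree P" and "n = degree Q"
  define S where "S = int_span w (m * n)"
  have low: "x ^ a * y ^ b \<in> S" if "a < m" "b < n" for a b
  proof -
    have "a * n + b < (a + 1) * n" using that by simp
    also have "\<dots> \<le> m * n" using that by (intro mult_le_mono1) simp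
    finally have "w (a * n + b) \<in> S" unfolding S_def by (rule int_span_generator)
    then show ?thesis using that unfolding w_def n_def by simp
  qed
  have neg_sum: "- (\<Sum>i\<in>I. of_int (c i) * (x ^ e i * y ^ d i)) \<in> S"
    if "\<And>i. i \<in> I \<Longrightarrow> e i < m \<and> d i < n" for I c e d
    using int_span_int_mult[of _ w "m * n" "-1"] that low unfolding S_def
    by (simp add: int_span_sum int_span_int_mult)
  consider "a < m" "b < n" | "a = m" "b < n" | "a < m" "b = n"
    using ab unfolding m_def n_def by linarith
  then have "x ^ a * y ^ b \<in> S"
  proof cases
    case 2
    then have "x ^ a * y ^ b = - (\<Sum>i<m. of_int (coeff P i) * (x ^ i * y ^ b))"
      using monic_root_power_degree[OF P] by (simp add: m_def sum_distrib_right mult.assoc)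
    also have "\<dots> \<in> S" using 2 by (intro neg_sum) auto
    finally show ?thesis .
  next
    case 3
    then have "x ^ a * y ^ b = - (\<Sum>i<n. of_int (coeff Q i) * (x ^ a * y ^ i))"
      using monic_root_power_degree[OF Q] by (simp add: n_def sum_distrib_left mult_ac)
    also have "\<dots> \<in> S" using 3 by (intro neg_sum) auto
    finally show ?thesis .
  qed (rule low)
  then show ?thesis unfolding S_def m_def n_def .
qed

text \<open>The monomials \<open>x ^ a * y ^ b\<close> with \<open>a < deg P\<close>, \<open>b < deg Q\<close> span a \<open>\<int>\<close>-module that is
  stable under multiplication by \<open>x\<close> and by \<open>y\<close>, hence by \<open>x + y\<close> and \<open>x * y\<close>.\<close>
lemma algebraic_int_add_mult:
  fixes x y :: "'a::field_char_0"
  assumes "algebraic_int x" "algebraic_int y"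
  shows "algebraic_int (x + y)" "algebraic_int (x * y)"
proof -
  obtain P where P: "monic P" "poly (of_int_poly P) x = 0" "degree P > 0"
    using assms(1) by (rule algebraic_int_monic_poly)
  obtain Q where Q: "monic Q" "poly (of_int_poly Q) y = 0" "degree Q > 0"
    using assms(2) by (rule algebraic_int_monic_poly)
  define m n where "m = degree P" and "n = degree Q"
  define w where "w i = x ^ (i div n) * y ^ (i mod n)" for i
  define S where "S = int_span w (m * n)"
  have monomial: "x ^ a * y ^ b \<in> S" if "a \<le> m" "b \<le> n" "a < m \<or> b < n" for a b
    using monomial_in_int_span[OF P(1,2) Q(1,2)] that unfolding S_def w_def m_def n_def by blast
  have mn: "0 < m * n" using P Q unfolding m_def n_def by simp
  have bounds: "i div n < m" "i mod n < n" if "i < m * n" for i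
    using that mn by (simp_all add: less_mult_imp_div_less)
  have X: "\<forall>i<m * n. x * w i \<in> S"
  proof (intro allI impI)
    fix i assume "i < m * n"
    then have "x ^ Suc (i div n) * y ^ (i mod n) \<in> S" using bounds[of i] by (intro monomial) auto
    then show "x * w i \<in> S" unfolding w_def by (simp add: mult.assoc)
  qed
  have Y: "\<forall>i<m * n. y * w i \<in> S"
  proof (intro allI impI)
    fix i assume "i < m * n"
    then have "x ^ (i div n) * y ^ Suc (i mod n) \<in> S" using bounds[of i] by (intro monomial) auto
    then show "y * w i \<in> S" unfolding w_def by (simp add: mult_ac)
  qed
  have w0: "w 0 \<noteq> 0" unfolding w_def by simp
  show "algebraic_int (x + y)"
    using X Y by (intro algebraic_int_if_int_span_stable[of 0 "m * n" w, OF mn w0])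
      (simp add: S_def distrib_right int_span_add)
  show "algebraic_int (x * y)"
    using X Y by (intro algebraic_int_if_int_span_stable[of 0 "m * n" w, OF mn w0])
      (simp add: S_def int_span_mult mult.assoc)
qed

lemmas algebraic_int_add = algebraic_int_add_mult(1)
lemmas algebraic_int_mult = algebraic_int_add_mult(2)

lemma algebraic_int_diff: "algebraic_int (x::'a::field_char_0) \<Longrightarrow> algebraic_int y \<Longrightarrow> algebraic_int (x - y)"
  using algebraic_int_add[of x "-y"] by auto

lemma algebraic_int_power: "algebraic_int (x::'a::field_char_0) \<Longrightarrow> algebraic_int (x ^ n)"
  by (induction n) (auto intro: algebraic_int_mult)

lemma algebraic_int_sum:
  "(\<And>i. i \<in> S \<Longrightarrow> algebraic_int (f i :: 'a::field_char_0)) \<Longrightarrow> algebraic_int (sum f S)"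
  by (induction S rule: infinite_finite_induct) (auto intro: algebraic_int_add)

lemma algebraic_int_common_monic_poly:
  fixes X :: "'a::field_char_0 set"
  assumes "finite X" "\<forall>x\<in>X. algebraic_int x"
  obtains H where "monic H" "\<forall>x\<in>X. poly (of_int_poly H) x = 0"
proof -
  from assms have "\<exists>H. monic H \<and> (\<forall>x\<in>X. poly (of_int_poly H) x = 0)"
  proof (induction X rule: finite_induct)
    case empty
    then show ?case by (intro exI[of _ 1]) simp
  next
    case (insert x X)
    then obtain H where H: "monic H" "\<forall>y\<in>X. poly (of_int_poly H) y = 0" by auto
    obtain h where h: "monic h" "poly (of_int_poly h) x = 0"
      using insert(4) unfolding algebraic_int_altdef_ipoly by auto
    have "monic (h * H)" using H(1) h(1) by (simp add: monic_mult)
    moreover have "\<forall>y\<in>insert x X. poly (of_int_poly (h * H)) y = 0"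
      using H(2) h(2) by (simp add: of_int_poly_hom.hom_mult)
    ultimately show ?case by blast
  qed
  then show ?thesis using that by blast
qed

section \<open>Indices of additive subgroups\<close>

definition coset :: "'a::ab_group_add set \<Rightarrow> 'a \<Rightarrow> 'a set" where
  "coset K x = (+) x ` K"

definition is_add_subgroup :: "'a::ab_group_add set \<Rightarrow> bool" where
  "is_add_subgroup K \<longleftrightarrow> 0 \<in> K \<and> (\<forall>x\<in>K. \<forall>y\<in>K. x - y \<in> K)"

context
  fixes K :: "'a::ab_group_add set"
  assumes K: "is_add_subgroup K"
begin

lemma add_subgroup_zero: "0 \<in> K"
  using K unfolding is_add_subgroup_def by blast

lemma add_subgroup_diff: "x \<in> K \<Longrightarrow> y \<in> K \<Longrightarrow> x - y \<in> K"
  using K unfolding is_add_subgroup_def by blast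

lemma add_subgroup_add: "x \<in> K \<Longrightarrow> y \<in> K \<Longrightarrow> x + y \<in> K"
  using add_subgroup_diff[of x "0 - y"] add_subgroup_diff[of 0 y] add_subgroup_zero by simp

lemma coset_eq_iff: "coset K x = coset K y \<longleftrightarrow> x - y \<in> K"
proof
  assume "coset K x = coset K y"
  then have "x \<in> coset K y"
    using add_subgroup_zero unfolding coset_def by (metis add_0_right rev_image_eqI)
  then show "x - y \<in> K" unfolding coset_def by auto
next
  assume xy: "x - y \<in> K"
  have "coset K x \<subseteq> coset K y" if "x - y \<in> K" for x y
  proof
    fix u assume "u \<in> coset K x"
    then obtain z where "z \<in> K" "u = x + z" unfolding coset_def by auto
    moreover have "(x - y) + z \<in> K" using add_subgroup_add that \<open>z \<in> K\<close> by blast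
    ultimately show "u \<in> coset K y" unfolding coset_def by (auto intro: image_eqI[of _ _ "x - y + z"])
  qed
  moreover have "y - x \<in> K" using add_subgroup_diff[OF add_subgroup_zero xy] by simp
  ultimately show "coset K x = coset K y" using xy by blast
qed

end

lemma add_subgroup_int_mult:
  fixes K :: "'a::comm_ring_1 set"
  assumes "is_add_subgroup K" "x \<in> K"
  shows "of_int j * x \<in> K"
proof (induction j rule: int_induct[where k = 0])
  case base then show ?case using add_subgroup_zero[OF assms(1)] by simp
next
  case (step1 i) then show ?case using add_subgroup_add[OF assms(1) _ assms(2)] by (simp add: distrib_right)
next
  case (step2 i) then show ?case using add_subgroup_diff[OF assms(1) _ assms(2)] by (simp add: left_diff_distrib)
qed

lemma coset_translate: "(+) x ` coset K y = coset K (x + y)"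
  unfolding coset_def image_image by (simp add: add.assoc)

lemma mem_coset_self: "is_add_subgroup H \<Longrightarrow> x \<in> coset H x"
  unfolding coset_def by (rule image_eqI[of _ _ 0]) (simp_all add: add_subgroup_zero)

lemma coset_subset:
  assumes "is_add_subgroup G" "H \<subseteq> G" "x \<in> G"
  shows "coset H x \<subseteq> G"
  unfolding coset_def using add_subgroup_add[OF assms(1) assms(3)] assms(2) by blast

context
  fixes K H :: "'a::ab_group_add set"
  assumes K: "is_add_subgroup K" and H: "is_add_subgroup H" and K_H: "K \<subseteq> H"
begin

lemma card_cosets_in_coset: "card (coset K ` coset H x) = card (coset K ` H)"
proof -
  have "coset K ` coset H x = image ((+) x) ` (coset K ` H)"
    unfolding coset_def[of H] by (simp add: image_image coset_translate)
  moreover have "inj ((+) x)" by (rule injI) simp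
  then have "inj_on (image ((+) x)) (coset K ` H)" by (intro inj_onI) (simp add: inj_image_eq_iff)
  ultimately show ?thesis by (simp add: card_image)
qed

lemma cosets_in_cosets_overlap:
  assumes "C \<in> coset K ` coset H x" "C \<in> coset K ` coset H y"
  shows "coset H x = coset H y"
proof -
  obtain u where u: "u \<in> coset H x" "C = coset K u" using assms(1) by blast
  obtain v where v: "v \<in> coset H y" "C = coset K v" using assms(2) by blast
  obtain h where h: "h \<in> H" "u = x + h" using u(1) unfolding coset_def by blast
  obtain h' where h': "h' \<in> H" "v = y + h'" using v(1) unfolding coset_def by blast
  have "coset K u = coset K v" using u(2) v(2) by simp
  then have "u - v \<in> K" by (simp only: coset_eq_iff[OF K])
  then have "u - v \<in> H" using K_H by blast
  then have "(u - v) - h \<in> H" using h(1) by (rule add_subgroup_diff[OF H])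
  then have "(u - v) - h + h' \<in> H" using h'(1) by (rule add_subgroup_add[OF H])
  moreover have "(u - v) - h + h' = x - y" using h(2) h'(2) by simp
  ultimately show ?thesis using coset_eq_iff[OF H] by simp
qed

text \<open>Lagrange's theorem for indices: the \<open>K\<close>-cosets in \<open>G\<close> fall into blocks, one for each \<open>H\<close>-coset,
  of \<open>[H : K]\<close> elements each.\<close>
lemma card_cosets_dvd:
  assumes G: "is_add_subgroup G" and "H \<subseteq> G" and fin: "finite (coset K ` G)"
  shows "card (coset K ` H) dvd card (coset K ` G)"
proof -
  define blocks where "blocks = (\<lambda>x. coset K ` coset H x) ` G"
  have union: "\<Union>blocks = coset K ` G"
  proof
    show "\<Union>blocks \<subseteq> coset K ` G"
      unfolding blocks_def using coset_subset[OF G \<open>H \<subseteq> G\<close>] by blast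
    show "coset K ` G \<subseteq> \<Union>blocks"
      unfolding blocks_def using mem_coset_self[OF H] by blast
  qed
  have "card (coset K ` H) * card blocks = card (\<Union>blocks)"
  proof (rule card_partition)
    show "finite (\<Union>blocks)" using fin union by simp
    then show "finite blocks" by (rule finite_UnionD)
    show "card c = card (coset K ` H)" if "c \<in> blocks" for c
      using that card_cosets_in_coset unfolding blocks_def by blast
    show "c1 \<inter> c2 = {}" if c: "c1 \<in> blocks" "c2 \<in> blocks" "c1 \<noteq> c2" for c1 c2
    proof (rule ccontr)
      assume "c1 \<inter> c2 \<noteq> {}"
      then obtain C where "C \<in> c1" "C \<in> c2" by blast
      moreover obtain x1 x2 where "c1 = coset K ` coset H x1" "c2 = coset K ` coset H x2"
        using c(1,2) unfolding blocks_def by blast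
      ultimately have "coset H x1 = coset H x2" using cosets_in_cosets_overlap by simp
      then show False using c(3) \<open>c1 = _\<close> \<open>c2 = _\<close> by simp
    qed
  qed
  then show ?thesis unfolding union by (metis dvd_triv_left)
qed

end

definition add_adjoin :: "'a::comm_ring_1 set \<Rightarrow> 'a \<Rightarrow> 'a set" where
  "add_adjoin K t = {z + of_int j * t | z j. z \<in> K}"

context
  fixes K :: "'a::comm_ring_1 set" and t :: 'a
  assumes K: "is_add_subgroup K"
begin

lemma is_add_subgroup_add_adjoin: "is_add_subgroup (add_adjoin K t)"
  unfolding is_add_subgroup_def
proof (intro conjI ballI)
  have "0 = 0 + of_int 0 * t" by simp
  then show "0 \<in> add_adjoin K t" unfolding add_adjoin_def using add_subgroup_zero[OF K] by blast
next
  fix x y assume "x \<in> add_adjoin K t" "y \<in> add_adjoin K t"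
  then obtain z1 j1 z2 j2 where "x = z1 + of_int j1 * t" "y = z2 + of_int j2 * t" "z1 \<in> K" "z2 \<in> K"
    unfolding add_adjoin_def by blast
  then have "x - y = (z1 - z2) + of_int (j1 - j2) * t" "z1 - z2 \<in> K"
    by (auto simp: algebra_simps add_subgroup_diff[OF K])
  then show "x - y \<in> add_adjoin K t" unfolding add_adjoin_def by blast
qed

lemma subset_add_adjoin: "K \<subseteq> add_adjoin K t"
proof
  fix z assume "z \<in> K"
  then show "z \<in> add_adjoin K t" unfolding add_adjoin_def by (intro CollectI exI[of _ z] exI[of _ 0]) simp
qed

lemma add_adjoin_subset:
  assumes G: "is_add_subgroup G" and "K \<subseteq> G" "t \<in> G"
  shows "add_adjoin K t \<subseteq> G"
proof
  fix u assume "u \<in> add_adjoin K t"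
  then obtain z j where "z \<in> K" "u = z + of_int j * t" unfolding add_adjoin_def by blast
  then show "u \<in> G" using add_subgroup_add[OF G] add_subgroup_int_mult[OF G \<open>t \<in> G\<close>] \<open>K \<subseteq> G\<close> by blast
qed

context
  fixes p :: nat
  assumes p: "prime p" and t: "of_nat p * t \<in> K" "t \<notin> K"
begin

lemma int_mult_mem_iff_dvd: "of_int j * t \<in> K \<longleftrightarrow> int p dvd j"
proof
  assume jt: "of_int j * t \<in> K"
  show "int p dvd j"
  proof (rule ccontr)
    assume "\<not> int p dvd j"
    then have "coprime (int p) j" using p by (simp add: prime_imp_coprime)
    then obtain u v where uv: "u * int p + v * j = 1"
      by (metis bezout_int coprime_iff_gcd_eq_1)
    have "of_int u * (of_nat p * t) + of_int v * (of_int j * t) = of_int (u * int p + v * j) * t"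
      by (simp add: algebra_simps)
    also have "\<dots> = t" using uv by simp
    finally have "t = of_int u * (of_nat p * t) + of_int v * (of_int j * t)" ..
    moreover have "of_int u * (of_nat p * t) \<in> K" "of_int v * (of_int j * t) \<in> K"
      using add_subgroup_int_mult[OF K] t(1) jt by blast+
    ultimately show False using t(2) add_subgroup_add[OF K] by metis
  qed
next
  assume "int p dvd j"
  then obtain m where "j = int p * m" by blast
  then have "of_int j * t = of_int m * (of_nat p * t)" by (simp add: mult_ac)
  then show "of_int j * t \<in> K" using add_subgroup_int_mult[OF K t(1)] by simp
qed

lemma card_cosets_add_adjoin: "card (coset K ` add_adjoin K t) = p"
proof -
  have "coset K ` add_adjoin K t = (\<lambda>j. coset K (of_int j * t)) ` {0..<int p}"
  proof (intro equalityI subsetI)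
    fix C assume "C \<in> coset K ` add_adjoin K t"
    then obtain z j where z: "z \<in> K" "C = coset K (z + of_int j * t)" unfolding add_adjoin_def by auto
    have "z + of_int j * t - of_int (j mod int p) * t = z + of_int (j - j mod int p) * t"
      by (simp add: algebra_simps)
    moreover have "of_int (j - j mod int p) * t \<in> K"
      unfolding int_mult_mem_iff_dvd by (simp add: minus_mod_eq_mult_div)
    ultimately have "z + of_int j * t - of_int (j mod int p) * t \<in> K"
      using z(1) add_subgroup_add[OF K] by metis
    then have "C = coset K (of_int (j mod int p) * t)"
      using z(2) coset_eq_iff[OF K] by simp
    moreover have "j mod int p \<in> {0..<int p}" using p by (simp add: prime_gt_0_nat)
    ultimately show "C \<in> (\<lambda>j. coset K (of_int j * t)) ` {0..<int p}" by blast
  next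
    fix C assume "C \<in> (\<lambda>j. coset K (of_int j * t)) ` {0..<int p}"
    moreover have "of_int j * t \<in> add_adjoin K t" for j
      unfolding add_adjoin_def using add_subgroup_zero[OF K] by force
    ultimately show "C \<in> coset K ` add_adjoin K t" by blast
  qed
  also have "card \<dots> = p"
  proof (subst card_image)
    show "inj_on (\<lambda>j. coset K (of_int j * t)) {0..<int p}"
    proof (rule inj_onI)
      fix i j assume ij: "i \<in> {0..<int p}" "j \<in> {0..<int p}"
        and "coset K (of_int i * t) = coset K (of_int j * t)"
      then have "of_int (i - j) * t \<in> K" using coset_eq_iff[OF K] by (simp add: left_diff_distrib)
      then have "int p dvd i - j" using int_mult_mem_iff_dvd by blast
      then show "i = j" using ij by (metis atLeastLessThan_iff mod_eq_dvd_iff mod_pos_pos_trivial)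
    qed
  qed simp
  finally show ?thesis .
qed

lemma prime_dvd_card_cosets:
  assumes G: "is_add_subgroup G" and "K \<subseteq> G" "t \<in> G" and fin: "finite (coset K ` G)"
  shows "p dvd card (coset K ` G)"
  using card_cosets_dvd[OF K is_add_subgroup_add_adjoin subset_add_adjoin G add_adjoin_subset[OF assms(1-3)] fin]
  unfolding card_cosets_add_adjoin .

end

end

definition int_reps :: "nat \<Rightarrow> rat poly set" where
  "int_reps n = {g. degree g < n \<and> int_coeffs g}"

definition frac_reps :: "nat \<Rightarrow> nat \<Rightarrow> rat poly set" where
  "frac_reps m n = {g. degree g < n \<and> int_coeffs (Polynomial.smult (of_nat m) g)}"

lemma degree_diff_less: "degree (g :: 'a::ab_group_add poly) < n \<Longrightarrow> degree h < n \<Longrightarrow> degree (g - h) < n"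
  by (meson degree_diff_le_max max_less_iff_conj le_less_trans)

lemma is_add_subgroup_int_reps: "n > 0 \<Longrightarrow> is_add_subgroup (int_reps n)"
  unfolding is_add_subgroup_def int_reps_def int_coeffs_def by (auto intro: degree_diff_less)

lemma is_add_subgroup_frac_reps: "n > 0 \<Longrightarrow> is_add_subgroup (frac_reps m n)"
  unfolding is_add_subgroup_def frac_reps_def int_coeffs_def
  by (auto intro: degree_diff_less simp: smult_diff_right right_diff_distrib)

definition frac_rep :: "nat \<Rightarrow> nat \<Rightarrow> (nat \<Rightarrow> nat) \<Rightarrow> rat poly" where
  "frac_rep m n c = (\<Sum>i<n. monom (of_nat (c i) / of_nat m) i)"

lemma coeff_frac_rep: "coeff (frac_rep m n c) j = (if j < n then of_nat (c j) / of_nat m else 0)"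
  by (simp add: frac_rep_def coeff_sum coeff_monom)

context
  fixes m n :: nat
  assumes m: "m > 0" and n: "n > 0"
begin

lemma degree_frac_rep: "degree (frac_rep m n c) < n"
  using n by (intro degree_lessI) (auto simp: coeff_frac_rep)

lemma frac_rep_in_frac_reps: "frac_rep m n c \<in> frac_reps m n"
  unfolding frac_reps_def int_coeffs_def using m degree_frac_rep by (simp add: coeff_frac_rep)

lemma frac_rep_eq_if_diff_in_int_reps:
  assumes "frac_rep m n c - frac_rep m n c' \<in> int_reps n" "j < n" "c j < m" "c' j < m"
  shows "c j = c' j"
proof -
  have "of_nat (c j) / of_nat m - of_nat (c' j) / of_nat m \<in> (\<int> :: rat set)"
    using assms(1,2) coeff_frac_rep unfolding int_reps_def int_coeffs_def
    by (metis (mono_tags) coeff_diff mem_Collect_eq)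
  then obtain z where "of_nat (c j) / of_nat m - of_nat (c' j) / of_nat m = (of_int z :: rat)"
    by (meson Ints_cases)
  then have "(of_int (int (c j) - int (c' j)) :: rat) = of_int (int m * z)" using m by (simp add: field_simps)
  then have eq: "int (c j) - int (c' j) = int m * z" by (simp only: of_int_eq_iff)
  moreover have "\<bar>int (c j) - int (c' j)\<bar> < int m" using assms(3,4) by linarith
  ultimately have "int m * \<bar>z\<bar> < int m * 1" by (simp add: abs_mult)
  then have "z = 0" using m by simp
  then show "c j = c' j" using eq by simp
qed

lemma frac_reps_diff_frac_rep:
  assumes "g \<in> frac_reps m n"
  obtains c where "c \<in> PiE {..<n} (\<lambda>_. {..<m})" "g - frac_rep m n c \<in> int_reps n"
proof -
  have deg: "degree g < n" and int: "int_coeffs (Polynomial.smult (of_nat m) g)"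
    using assms unfolding frac_reps_def by auto
  have "\<exists>zj. of_nat m * coeff g j = of_int zj" for j
    using int unfolding int_coeffs_def by (metis Ints_cases coeff_smult)
  then obtain z where z: "of_nat m * coeff g j = of_int (z j)" for j
    by metis
  define c where "c j = (if j < n then nat (z j mod int m) else undefined)" for j
  have "c \<in> PiE {..<n} (\<lambda>_. {..<m})"
    unfolding PiE_iff extensional_def c_def using m by (simp add: nat_less_iff)
  moreover have "g - frac_rep m n c \<in> int_reps n"
    unfolding int_reps_def int_coeffs_def
  proof (intro CollectI conjI allI)
    show "degree (g - frac_rep m n c) < n" using deg degree_frac_rep by (rule degree_diff_less)
    fix j
    show "coeff (g - frac_rep m n c) j \<in> \<int>"
    proof (cases "j < n")
      case True
      have zj: "z j = int m * (z j div int m) + int (c j)" using True m by (simp add: c_def)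
      have "coeff g j = of_int (z j) / of_nat m" using z[of j] m by (simp add: field_simps)
      also have "\<dots> = of_int (z j div int m) + of_nat (c j) / of_nat m"
        using m by (subst zj) (simp add: add_divide_distrib)
      finally have "coeff (g - frac_rep m n c) j = of_int (z j div int m)"
        using True by (simp add: coeff_frac_rep)
      then show ?thesis by simp
    qed (use deg in \<open>simp add: coeff_frac_rep coeff_eq_0\<close>)
  qed
  ultimately show ?thesis using that by blast
qed

lemma card_cosets_frac_reps: "card (coset (int_reps n) ` frac_reps m n) = m ^ n"
proof -
  define X where "X = PiE {..<n} (\<lambda>_. {..<m})"
  note coset_eq = coset_eq_iff[OF is_add_subgroup_int_reps[OF n]]
  have "coset (int_reps n) ` frac_reps m n = (\<lambda>c. coset (int_reps n) (frac_rep m n c)) ` X"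
  proof (intro equalityI subsetI)
    fix C assume "C \<in> coset (int_reps n) ` frac_reps m n"
    then obtain g where g: "g \<in> frac_reps m n" "C = coset (int_reps n) g" by blast
    obtain c where "c \<in> X" "g - frac_rep m n c \<in> int_reps n"
      using frac_reps_diff_frac_rep[OF g(1)] unfolding X_def by blast
    then show "C \<in> (\<lambda>c. coset (int_reps n) (frac_rep m n c)) ` X" using g(2) coset_eq by blast
  qed (use frac_rep_in_frac_reps in blast)
  also have "card \<dots> = card X"
  proof (rule card_image, rule inj_onI)
    fix c c' assume c: "c \<in> X" "c' \<in> X"
      and "coset (int_reps n) (frac_rep m n c) = coset (int_reps n) (frac_rep m n c')"
    then have "frac_rep m n c - frac_rep m n c' \<in> int_reps n" using coset_eq by blast
    then have "c j = c' j" if "j < n" for j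
      using that c frac_rep_eq_if_diff_in_int_reps unfolding X_def by (auto simp: PiE_iff)
    with c show "c = c'" unfolding X_def by (auto intro: PiE_ext)
  qed
  also have "card X = m ^ n" unfolding X_def by (simp add: card_PiE)
  finally show ?thesis .
qed

end

section \<open>The integral closure for a cubic with distinct roots\<close>

lemma linear_factors_dvd_if_roots:
  fixes G :: "'a::idom poly"
  assumes "poly G a1 = 0" "poly G a2 = 0" "poly G a3 = 0" "a1 \<noteq> a2" "a1 \<noteq> a3" "a2 \<noteq> a3"
  shows "[:-a1, 1:] * [:-a2, 1:] * [:-a3, 1:] dvd G"
proof -
  obtain G1 where G1: "G = [:-a1, 1:] * G1" using assms(1) poly_eq_0_iff_dvd by (metis dvdE)
  have "poly G1 a2 = 0" using assms(2,4) G1 by simp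
  then obtain G2 where G2: "G1 = [:-a2, 1:] * G2" using poly_eq_0_iff_dvd by (metis dvdE)
  have "poly G2 a3 = 0" using assms(3,5,6) G1 G2 by simp
  then obtain G3 where "G2 = [:-a3, 1:] * G3" using poly_eq_0_iff_dvd by (metis dvdE)
  then have "G = [:-a1, 1:] * [:-a2, 1:] * [:-a3, 1:] * G3" using G1 G2 by (simp only: mult.assoc)
  then show ?thesis by (rule dvdI)
qed

lemma monic_dvd_of_int_poly_imp_dvd:
  fixes f g :: "int poly"
  assumes "monic f" and "(of_int_poly f :: rat poly) dvd of_int_poly g"
  shows "f dvd g"
proof -
  obtain q r where qr: "pseudo_divmod g f = (q, r)" by (cases "pseudo_divmod g f")
  have "f \<noteq> 0" using assms(1) by auto
  from pseudo_divmod[OF this qr] assms(1) have g: "g = f * q + r" and r: "r = 0 \<or> degree r < degree f"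
    by auto
  have "(of_int_poly r :: rat poly) = of_int_poly g - of_int_poly f * of_int_poly q"
    using g by (simp add: of_int_poly_hom.hom_add of_int_poly_hom.hom_mult)
  then have "(of_int_poly f :: rat poly) dvd of_int_poly r" using assms(2) by (simp add: dvd_diff)
  then have "r = 0" using r dvd_imp_degree_le[of "of_int_poly f :: rat poly"] by fastforce
  then show ?thesis using g by simp
qed

lemma poly_eq_pCons3:
  assumes "degree (g :: 'a::zero poly) < 3"
  shows "g = [:coeff g 0, coeff g 1, coeff g 2:]"
proof (rule poly_eqI)
  fix n
  show "coeff g n = coeff [:coeff g 0, coeff g 1, coeff g 2:] n"
  proof (cases "n < 3")
    case True
    then have "n = 0 \<or> n = 1 \<or> n = 2" by auto
    then show ?thesis by (auto simp: numeral_2_eq_2)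
  next
    case False
    then show ?thesis using assms by (simp add: coeff_eq_0 coeff_pCons split: nat.split)
  qed
qed

definition eval_rat :: "rat poly \<Rightarrow> complex \<Rightarrow> complex" where
  "eval_rat g a = poly (map_poly of_rat g) a"

lemma map_poly_of_rat_of_int_poly:
  "map_poly of_rat (of_int_poly v :: rat poly) = (of_int_poly v :: complex poly)"
  by (simp add: map_poly_map_poly o_def)

lemma eval_rat_of_int_poly: "eval_rat (of_int_poly v) a = poly (of_int_poly v) a"
  by (simp add: eval_rat_def map_poly_of_rat_of_int_poly)

lemma eval_rat_diff: "eval_rat (g - h) a = eval_rat g a - eval_rat h a"
proof -
  have "map_poly of_rat (g - h) = map_poly of_rat g - (map_poly of_rat h :: complex poly)"
    by (rule poly_eqI) (simp add: coeff_map_poly of_rat_diff)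
  then show ?thesis by (simp add: eval_rat_def)
qed

lemma eval_rat_mult: "eval_rat (g * h) a = eval_rat g a * eval_rat h a"
proof -
  have "map_poly of_rat (g * h) = map_poly of_rat g * (map_poly of_rat h :: complex poly)"
    by (induct g) (auto simp: hom_distribs)
  then show ?thesis by (simp add: eval_rat_def)
qed

lemma eval_rat_smult: "eval_rat (Polynomial.smult c g) a = of_rat c * eval_rat g a"
  by (simp add: eval_rat_def of_rat_hom.map_poly_hom_smult)

lemma eval_rat_pcompose: "eval_rat (of_int_poly h \<circ>\<^sub>p g) a = poly (of_int_poly h) (eval_rat g a)"
  by (simp add: eval_rat_def of_rat_hom.map_poly_pcompose map_poly_map_poly o_def poly_pcompose)

lemma eval_rat_degree_less_3:
  assumes "degree g < 3"
  shows "eval_rat g a = of_rat (coeff g 0) + of_rat (coeff g 1) * a + of_rat (coeff g 2) * a ^ 2"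
  by (subst poly_eq_pCons3[OF assms]) (simp add: eval_rat_def hom_distribs algebra_simps power2_eq_square)

lemma cubic_vieta:
  fixes a1 a2 a3 :: complex
  assumes "of_int_poly [:B, A, k, 1:] = [:-a1, 1:] * [:-a2, 1:] * [:-a3, 1:]"
  shows "of_int k = -(a1 + a2 + a3)" "of_int A = a1*a2 + a1*a3 + a2*a3" "of_int B = -(a1*a2*a3)"
proof -
  have "[:of_int B, of_int A, of_int k, 1:] = [:-a1, 1:] * [:-a2, 1:] * ([:-a3, 1:] :: complex poly)"
    using assms by simp
  then have "of_int B = -(a1*a2*a3) \<and> of_int A = a1*a2 + a1*a3 + a2*a3 \<and> of_int k = -(a1 + a2 + a3)"
    by (simp add: algebra_simps)
  then show "of_int k = -(a1 + a2 + a3)" "of_int A = a1*a2 + a1*a3 + a2*a3" "of_int B = -(a1*a2*a3)"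
    by auto
qed

lemma cubic_disc_eq_vandermonde_sq:
  fixes a1 a2 a3 :: complex
  assumes "of_int_poly [:B, A, k, 1:] = [:-a1, 1:] * [:-a2, 1:] * [:-a3, 1:]"
  shows "of_int (cubic_disc k A B) = ((a1 - a2) * (a1 - a3) * (a2 - a3)) ^ 2"
proof -
  have "of_int (cubic_disc k A B) = (of_int k)^2 * (of_int A)^2 - 4 * (of_int A)^3
      - 4 * (of_int k)^3 * of_int B - 27 * (of_int B)^2 + 18 * of_int k * of_int A * (of_int B :: complex)"
    by (simp add: cubic_disc_def)
  also have "\<dots> = ((a1 - a2) * (a1 - a3) * (a2 - a3)) ^ 2"
    unfolding cubic_vieta[OF assms] by (simp add: power2_eq_square power3_eq_cube algebra_simps)
  finally show ?thesis .
qed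

locale cubic_roots =
  fixes k A B :: int and a1 a2 a3 :: complex
  assumes factorization: "of_int_poly [:B, A, k, 1:] = [:-a1, 1:] * [:-a2, 1:] * [:-a3, 1:]"
    and distinct_roots: "a1 \<noteq> a2" "a1 \<noteq> a3" "a2 \<noteq> a3"
begin

abbreviation f :: "int poly" where "f \<equiv> [:B, A, k, 1:]"

abbreviation root_set :: "complex set" where "root_set \<equiv> {a1, a2, a3}"

lemmas vieta = cubic_vieta[OF factorization]

lemma poly_f_root: "a \<in> root_set \<Longrightarrow> poly (of_int_poly f) a = 0"
  unfolding factorization poly_mult by auto

lemma root_equation:
  assumes "a \<in> root_set"
  shows "a ^ 3 + of_int k * a ^ 2 + of_int A * a + of_int B = 0"
proof -
  have "poly (of_int_poly f) a = 0" using assms by (rule poly_f_root)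
  then show ?thesis by (simp add: algebra_simps power2_eq_square power3_eq_cube)
qed

lemma root_algebraic_int: "a \<in> root_set \<Longrightarrow> algebraic_int a"
  unfolding algebraic_int_altdef_ipoly using poly_f_root by (intro exI[of _ f]) simp

lemma disc_nonzero: "cubic_disc k A B \<noteq> 0"
proof -
  have "((a1 - a2) * (a1 - a3) * (a2 - a3)) ^ 2 \<noteq> 0" using distinct_roots by simp
  then show ?thesis using cubic_disc_eq_vandermonde_sq[OF factorization] by (metis of_int_0)
qed

definition integral_at_roots :: "rat poly \<Rightarrow> bool" where
  "integral_at_roots g \<longleftrightarrow> (\<forall>a\<in>root_set. algebraic_int (eval_rat g a))"

lemma of_int_poly_f_dvd_if_roots:
  assumes "\<forall>a\<in>root_set. poly (map_poly of_rat G) a = 0"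
  shows "of_int_poly f dvd G"
proof -
  have "[:-a1, 1:] * [:-a2, 1:] * [:-a3, 1:] dvd (map_poly of_rat G :: complex poly)"
    using assms distinct_roots by (intro linear_factors_dvd_if_roots) auto
  then have "map_poly of_rat (of_int_poly f) dvd (map_poly of_rat G :: complex poly)"
    by (simp only: map_poly_of_rat_of_int_poly factorization)
  then show ?thesis by (rule of_rat_hom.dvd_map_poly_hom_imp_dvd)
qed

lemma f_dvd_if_roots:
  assumes "\<forall>a\<in>root_set. poly (of_int_poly G) a = 0"
  shows "f dvd G"
proof (rule monic_dvd_of_int_poly_imp_dvd)
  show "of_int_poly f dvd (of_int_poly G :: rat poly)"
    using assms by (intro of_int_poly_f_dvd_if_roots) (simp add: map_poly_of_rat_of_int_poly)
qed simp

lemma integral_in_quot_iff: "integral_in_quot f g \<longleftrightarrow> integral_at_roots g"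
proof
  assume "integral_in_quot f g"
  then obtain h where h: "monic h" "of_int_poly f dvd (of_int_poly h \<circ>\<^sub>p g :: rat poly)"
    unfolding integral_in_quot_def by auto
  then obtain q where q: "of_int_poly h \<circ>\<^sub>p g = (of_int_poly f :: rat poly) * q" by blast
  have "poly (of_int_poly h) (eval_rat g a) = 0" if "a \<in> root_set" for a
  proof -
    have "poly (of_int_poly h) (eval_rat g a) = eval_rat (of_int_poly f * q) a"
      by (simp add: q flip: eval_rat_pcompose)
    also have "\<dots> = poly (of_int_poly f) a * eval_rat q a"
      by (simp only: eval_rat_mult eval_rat_of_int_poly)
    finally show ?thesis using poly_f_root[OF that] by simp
  qed
  then show "integral_at_roots g"
    unfolding integral_at_roots_def algebraic_int_altdef_ipoly using h(1) by blast
next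
  assume "integral_at_roots g"
  then obtain h where h: "monic h" "\<forall>x\<in>eval_rat g ` root_set. poly (of_int_poly h) x = 0"
    using algebraic_int_common_monic_poly[of "eval_rat g ` root_set"]
    unfolding integral_at_roots_def by blast
  then have "\<forall>a\<in>root_set. poly (map_poly of_rat (of_int_poly h \<circ>\<^sub>p g)) a = 0"
    using eval_rat_pcompose unfolding eval_rat_def by simp
  then have "of_int_poly f dvd (of_int_poly h \<circ>\<^sub>p g)" by (rule of_int_poly_f_dvd_if_roots)
  then show "integral_in_quot f g" unfolding integral_in_quot_def using h(1) by blast
qed

lemma mem_int_closure_iff: "g \<in> int_closure f \<longleftrightarrow> degree g < 3 \<and> integral_at_roots g"
  unfolding int_closure_def integral_in_quot_iff by (simp add: numeral_3_eq_3)

lemma integral_at_roots_diff: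
  "integral_at_roots g \<Longrightarrow> integral_at_roots h \<Longrightarrow> integral_at_roots (g - h)"
  unfolding integral_at_roots_def eval_rat_diff by (auto intro: algebraic_int_diff)

lemma integral_at_roots_int_smult:
  "integral_at_roots g \<Longrightarrow> integral_at_roots (Polynomial.smult (of_int n) g)"
  unfolding integral_at_roots_def eval_rat_smult by (auto intro: algebraic_int_mult)

lemma integral_at_roots_if_int_coeffs:
  assumes "int_coeffs g"
  shows "integral_at_roots g"
  unfolding integral_at_roots_def
proof
  fix a assume a: "a \<in> root_set"
  have "eval_rat g a = (\<Sum>i\<le>degree g. of_rat (coeff g i) * a ^ i)"
    unfolding eval_rat_def by (simp add: poly_altdef degree_map_poly)
  also have "algebraic_int \<dots>"
  proof (rule algebraic_int_sum)
    fix i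
    obtain n where "coeff g i = of_int n" using assms unfolding int_coeffs_def by (meson Ints_cases)
    then show "algebraic_int (of_rat (coeff g i) * a ^ i)"
      using root_algebraic_int[OF a] by (auto intro!: algebraic_int_mult algebraic_int_power)
  qed
  finally show "algebraic_int (eval_rat g a)" .
qed

lemma is_add_subgroup_int_closure: "is_add_subgroup (int_closure f)"
  unfolding is_add_subgroup_def
  using integral_at_roots_if_int_coeffs[of 0] integral_at_roots_diff degree_diff_less
  by (auto simp: int_coeffs_def mem_int_closure_iff)

lemma int_reps_subset_int_closure: "int_reps 3 \<subseteq> int_closure f"
  using integral_at_roots_if_int_coeffs by (auto simp: int_reps_def mem_int_closure_iff)

lemma ind_eq_card_cosets: "ind f = card (coset (int_reps 3) ` int_closure f)"
proof -
  have "{g' \<in> int_closure f. int_coeffs (g - g')} = coset (int_reps 3) g" if g: "g \<in> int_closure f" for g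
  proof (intro equalityI subsetI)
    fix g' assume g': "g' \<in> {g' \<in> int_closure f. int_coeffs (g - g')}"
    then have "int_coeffs (g - g')" by blast
    then have "int_coeffs (g' - g)" unfolding int_coeffs_def by (metis Ints_minus coeff_minus minus_diff_eq)
    moreover have "degree (g' - g) < 3"
      using g g' by (auto simp: mem_int_closure_iff intro: degree_diff_less)
    ultimately have "g' - g \<in> int_reps 3" unfolding int_reps_def by blast
    then show "g' \<in> coset (int_reps 3) g" unfolding coset_def by (rule image_eqI[rotated]) simp
  next
    fix g' assume "g' \<in> coset (int_reps 3) g"
    then obtain z where z: "z \<in> int_reps 3" "g' = g + z" unfolding coset_def by auto
    then have "g' \<in> int_closure f"
      using add_subgroup_add[OF is_add_subgroup_int_closure g] int_reps_subset_int_closure by auto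
    moreover have "int_coeffs (g - g')" using z unfolding int_reps_def int_coeffs_def by auto
    ultimately show "g' \<in> {g' \<in> int_closure f. int_coeffs (g - g')}" by blast
  qed
  then have "(\<lambda>g. {g' \<in> int_closure f. int_coeffs (g - g')}) ` int_closure f
      = coset (int_reps 3) ` int_closure f"
    by (rule image_cong[OF refl])
  then show ?thesis unfolding ind_def by simp
qed

end

lemma cubic_roots_exist:
  assumes "cubic_disc k A B \<noteq> 0"
  obtains a1 a2 a3 where "cubic_roots k A B a1 a2 a3"
proof -
  let ?f = "of_int_poly [:B, A, k, 1:] :: complex poly"
  have lc: "degree ?f = 3" "coeff ?f (degree ?f) = 1" by (simp_all add: eval_nat_numeral)
  obtain as where as: "Polynomial.smult (coeff ?f (degree ?f)) (\<Prod>a\<leftarrow>as. [:- a, 1:]) = ?f"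
    "length as = degree ?f"
    using fundamental_theorem_algebra_factorized[of ?f] by blast
  from as(2) lc(1) obtain a1 a2 a3 where "as = [a1, a2, a3]"
    by (auto simp: numeral_3_eq_3 length_Suc_conv)
  moreover from as(1) have "(\<Prod>a\<leftarrow>as. [:- a, 1:]) = ?f" unfolding lc(2) by (simp only: smult_1_left)
  ultimately have "?f = [:-a1, 1:] * ([:-a2, 1:] * [:-a3, 1:])"
    by (simp only: list.map prod_list.Cons prod_list.Nil mult_1_right)
  then have fac: "?f = [:-a1, 1:] * [:-a2, 1:] * [:-a3, 1:]" by (simp only: mult.assoc)
  have "((a1 - a2) * (a1 - a3) * (a2 - a3)) ^ 2 \<noteq> 0"
    using cubic_disc_eq_vandermonde_sq[OF fac] assms by (metis of_int_eq_0_iff)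
  then have "a1 \<noteq> a2" "a1 \<noteq> a3" "a2 \<noteq> a3" by auto
  with fac show ?thesis by (intro that) (unfold_locales)
qed

lemma hankel3_adjugate:
  fixes a b c d e x0 x1 x2 :: "'a::comm_ring_1"
  assumes "r0 = a*x0 + b*x1 + c*x2" "r1 = b*x0 + c*x1 + d*x2" "r2 = c*x0 + d*x1 + e*x2"
    and "D = a*(c*e - d^2) - b*(b*e - c*d) + c*(b*d - c^2)"
  shows "D * x0 = (c*e - d^2)*r0 + (c*d - b*e)*r1 + (b*d - c^2)*r2"
    "D * x1 = (c*d - b*e)*r0 + (a*e - c^2)*r1 + (b*c - a*d)*r2"
    "D * x2 = (b*d - c^2)*r0 + (b*c - a*d)*r1 + (a*c - b^2)*r2"
  unfolding assms by (simp_all add: algebra_simps power2_eq_square)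

text \<open>The power sums \<open>a1 ^ m + a2 ^ m + a3 ^ m\<close> of the roots, \<open>m \<le> 4\<close>, by Newton's identities.\<close>
definition cubic_power_sum :: "int \<Rightarrow> int \<Rightarrow> int \<Rightarrow> nat \<Rightarrow> int" where
  "cubic_power_sum k A B m =
     (if m = 0 then 3 else if m = 1 then -k else if m = 2 then k^2 - 2*A
      else if m = 3 then 3*k*A - 3*B - k^3 else k^4 - 4*k^2*A + 2*A^2 + 4*k*B)"

lemma cubic_power_sum_hankel_det:
  fixes k A B :: int
  defines "s \<equiv> cubic_power_sum k A B"
  shows "s 0 * (s 2 * s 4 - (s 3)^2) - s 1 * (s 1 * s 4 - s 2 * s 3) + s 2 * (s 1 * s 3 - (s 2)^2)
    = cubic_disc k A B"
  unfolding s_def cubic_power_sum_def cubic_disc_def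
  by (simp add: algebra_simps power2_eq_square power3_eq_cube power4_eq_xxxx)

context cubic_roots
begin

lemma power_sum_roots:
  assumes "m \<le> 4"
  shows "a1^m + a2^m + a3^m = of_int (cubic_power_sum k A B m)"
proof -
  have "m = 0 \<or> m = 1 \<or> m = 2 \<or> m = 3 \<or> m = 4" using assms by auto
  then show ?thesis
    by (elim disjE) (simp_all add: cubic_power_sum_def vieta algebra_simps power2_eq_square
        power3_eq_cube power4_eq_xxxx)
qed

lemma trace_int_closure_in_Ints:
  assumes "g \<in> int_closure f" "j \<le> 2"
  defines "s \<equiv> \<lambda>m. rat_of_int (cubic_power_sum k A B m)"
  shows "coeff g 0 * s j + coeff g 1 * s (j + 1) + coeff g 2 * s (j + 2) \<in> \<int>"
proof -
  define x0 x1 x2 where "x0 = coeff g 0" and "x1 = coeff g 1" and "x2 = coeff g 2"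
  define r where "r = x0 * s j + x1 * s (j + 1) + x2 * s (j + 2)"
  have deg: "degree g < 3" and int: "integral_at_roots g"
    using assms(1) unfolding mem_int_closure_iff by auto
  define T where "T = eval_rat g a1 * a1^j + eval_rat g a2 * a2^j + eval_rat g a3 * a3^j"
  have "algebraic_int T"
    unfolding T_def using int root_algebraic_int unfolding integral_at_roots_def
    by (auto intro!: algebraic_int_add algebraic_int_mult algebraic_int_power)
  have "T = of_rat x0 * (a1^j + a2^j + a3^j) + of_rat x1 * (a1^(j+1) + a2^(j+1) + a3^(j+1))
      + of_rat x2 * (a1^(j+2) + a2^(j+2) + a3^(j+2))"
    unfolding T_def eval_rat_degree_less_3[OF deg] x0_def x1_def x2_def
    by (simp add: algebra_simps power2_eq_square)
  also have "\<dots> = of_rat r"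
    using power_sum_roots[of j] power_sum_roots[of "j + 1"] power_sum_roots[of "j + 2"] assms(2)
    unfolding r_def s_def by (simp add: of_rat_add of_rat_mult)
  finally have "(of_rat r :: complex) \<in> \<int>"
    using \<open>algebraic_int T\<close> rational_algebraic_int_is_int by (metis Rats_of_rat)
  then have "r \<in> \<int>" by (metis Ints_cases Ints_of_int of_rat_eq_iff of_rat_of_int_eq)
  then show ?thesis unfolding r_def x0_def x1_def x2_def .
qed

text \<open>The traces of \<open>g a^j\<close>, \<open>j \<le> 2\<close>, are integers, and the linear system expressing them through the
  coefficients of \<open>g\<close> has the Hankel matrix of power sums, whose determinant is the discriminant.\<close>
lemma disc_mult_coeff_int_closure:
  assumes "g \<in> int_closure f"
  shows "of_int (cubic_disc k A B) * coeff g i \<in> \<int>"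
proof -
  define x0 x1 x2 where "x0 = coeff g 0" and "x1 = coeff g 1" and "x2 = coeff g 2"
  define s where "s m = rat_of_int (cubic_power_sum k A B m)" for m
  define r where "r j = x0 * s j + x1 * s (j + 1) + x2 * s (j + 2)" for j
  have r_int: "r j \<in> \<int>" if "j \<le> 2" for j
    using trace_int_closure_in_Ints[OF assms that] unfolding r_def s_def x0_def x1_def x2_def .
  have r: "r 0 = s 0 * x0 + s 1 * x1 + s 2 * x2" "r 1 = s 1 * x0 + s 2 * x1 + s 3 * x2"
      "r 2 = s 2 * x0 + s 3 * x1 + s 4 * x2"
    unfolding r_def by (simp_all add: mult_ac eval_nat_numeral)
  have D: "rat_of_int (cubic_disc k A B)
      = s 0 * (s 2 * s 4 - (s 3)^2) - s 1 * (s 1 * s 4 - s 2 * s 3) + s 2 * (s 1 * s 3 - (s 2)^2)"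
    unfolding s_def cubic_power_sum_hankel_det[symmetric] by simp
  have s_int: "s m \<in> \<int>" for m unfolding s_def by simp
  have "rat_of_int (cubic_disc k A B) * x0 \<in> \<int>" "rat_of_int (cubic_disc k A B) * x1 \<in> \<int>"
    "rat_of_int (cubic_disc k A B) * x2 \<in> \<int>"
    unfolding hankel3_adjugate[OF r D] by (simp_all add: s_int r_int)
  moreover have "i < 3 \<Longrightarrow> i = 0 \<or> i = 1 \<or> i = 2" by auto
  moreover have "\<not> i < 3 \<Longrightarrow> coeff g i = 0"
    using assms by (simp add: coeff_eq_0 mem_int_closure_iff)
  ultimately show ?thesis unfolding x0_def x1_def x2_def by (cases "i < 3") auto
qed

end

section \<open>Dedekind's criterion for the index\<close>

lemma cubic_root_quadratic_relation:
  fixes y b0 b1 b2 :: "'a::comm_ring_1"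
  assumes "y^3 + b2*y^2 + b1*y + b0 = 0"
  shows "y * (y^2 + b2*y) = -(b1*y + b0)"
    and "(y^2 + b2*y)^2 + b1*(y^2 + b2*y) + b0*b2 = -(b0*y)"
proof -
  show uy: "y * (y^2 + b2*y) = -(b1*y + b0)"
    using assms by (simp add: algebra_simps power2_eq_square power3_eq_cube eq_neg_iff_add_eq_0)
  have "(y^2 + b2*y)^2 = (y * (y^2 + b2*y)) * (y + b2)" by (simp add: algebra_simps power2_eq_square)
  then have sq: "(y^2 + b2*y)^2 = -(b1*y + b0) * (y + b2)" unfolding uy .
  show "(y^2 + b2*y)^2 + b1*(y^2 + b2*y) + b0*b2 = -(b0*y)"
    unfolding sq by (simp add: algebra_simps power2_eq_square)
qed

lemma cubic_root_resolvent:
  fixes y b0 b1 b2 :: "'a::comm_ring_1"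
  assumes y: "y^3 + b2*y^2 + b1*y + b0 = 0"
  defines "u \<equiv> y^2 + b2*y"
  shows "u^3 + 2*b1*u^2 + (b1^2 + b0*b2)*u + (b0*b1*b2 - b0^2) = 0"
proof -
  note rel = cubic_root_quadratic_relation[OF y, folded u_def]
  have "(u^2 + b1*u + b0*b2)*(u + b1) = -(b0*(y*u + b1*y))" unfolding rel(2) by (simp add: algebra_simps)
  also have "\<dots> = b0^2" unfolding rel(1) by (simp add: algebra_simps power2_eq_square)
  finally show ?thesis by (simp add: algebra_simps power2_eq_square power3_eq_cube)
qed

lemma algebraic_int_cubic_root_quotient:
  fixes y :: "'a::field_char_0"
  assumes y: "y^3 + of_int b2 * y^2 + of_int b1 * y + of_int b0 = 0"
    and "int p dvd b1" "int p ^ 2 dvd b0" "p > 0"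
  shows "algebraic_int ((y^2 + of_int b2 * y) / of_nat p)"
proof -
  obtain c1 where c1: "b1 = int p * c1" using assms(2) by blast
  obtain c0 where c0: "b0 = int p ^ 2 * c0" using assms(3) by blast
  define u where "u = y^2 + of_int b2 * y"
  define P :: 'a where "P = of_nat p"
  have P: "P \<noteq> 0" using assms(4) unfolding P_def by simp
  define h :: "int poly" where "h = [:c0 * b2 * c1 - int p * c0^2, c1^2 + c0 * b2, 2 * c1, 1:]"
  have "poly (of_int_poly h) (u / P)
      = (u^3 + 2 * of_int b1 * u^2 + ((of_int b1)^2 + of_int b0 * of_int b2) * u
         + (of_int b0 * of_int b1 * of_int b2 - (of_int b0)^2)) / P^3"
    unfolding h_def c1 c0 P_def using P[unfolded P_def]
    by (simp add: field_simps power2_eq_square power3_eq_cube)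
  also have "\<dots> = 0"
    using cubic_root_resolvent[OF y] unfolding u_def by simp
  finally show ?thesis
    unfolding algebraic_int_altdef_ipoly u_def[symmetric] P_def[symmetric]
    by (intro exI[of _ h]) (simp add: h_def)
qed

context cubic_roots
begin

definition taylor0 :: "int \<Rightarrow> int" where "taylor0 l = l^3 + k*l^2 + A*l + B"
definition taylor1 :: "int \<Rightarrow> int" where "taylor1 l = 3*l^2 + 2*k*l + A"
definition taylor2 :: "int \<Rightarrow> int" where "taylor2 l = 3*l + k"

lemma taylor_root_equation:
  assumes "a \<in> root_set"
  shows "(a - of_int l)^3 + of_int (taylor2 l) * (a - of_int l)^2 + of_int (taylor1 l) * (a - of_int l)
    + of_int (taylor0 l) = 0"
proof -
  have "(a - of_int l)^3 + of_int (taylor2 l) * (a - of_int l)^2 + of_int (taylor1 l) * (a - of_int l)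
      + of_int (taylor0 l) = a^3 + of_int k * a^2 + of_int A * a + of_int B"
    unfolding taylor0_def taylor1_def taylor2_def by (simp add: algebra_simps power2_eq_square power3_eq_cube)
  then show ?thesis using root_equation[OF assms] by simp
qed

lemma shifted_quotient_in_int_closure:
  assumes p: "prime p" and r: "int p ^ 2 dvd taylor0 r" "int p dvd taylor1 r"
  shows "Polynomial.smult (1 / of_nat p) (of_int_poly [:-(2 * r^2 + k * r), r + k, 1:]) \<in> int_closure f"
    (is "?t \<in> _")
proof -
  have "degree ?t < 3" by (simp add: degree_smult_le numeral_3_eq_3)
  moreover have "integral_at_roots ?t"
    unfolding integral_at_roots_def
  proof
    fix a assume a: "a \<in> root_set"
    have "eval_rat ?t a = ((a - of_int r)^2 + of_int (taylor2 r) * (a - of_int r)) / of_nat p"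
      unfolding eval_rat_smult eval_rat_of_int_poly taylor2_def
      by (simp add: field_simps power2_eq_square of_rat_divide)
    also have "algebraic_int \<dots>"
      using taylor_root_equation[OF a] r p by (intro algebraic_int_cubic_root_quotient) (auto simp: prime_gt_0_nat)
    finally show "algebraic_int (eval_rat ?t a)" .
  qed
  ultimately show ?thesis unfolding mem_int_closure_iff by blast
qed

text \<open>The quotient \<open>((x - r)^2 + f''(r)/2 (x - r)) / p\<close> is integral and has order \<open>p\<close> modulo \<open>\<int>[x]\<close>.\<close>
lemma dvd_ind_if_criterion:
  assumes p: "prime p" and r: "int p ^ 2 dvd taylor0 r" "int p dvd taylor1 r"
  shows "p dvd ind f"
proof -
  define w :: "int poly" where "w = [:-(2 * r^2 + k * r), r + k, 1:]"
  define t :: "rat poly" where "t = Polynomial.smult (1 / of_nat p) (of_int_poly w)"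
  have P: "(of_nat p :: rat) \<noteq> 0" using p by (simp add: prime_gt_0_nat)
  have t_closure: "t \<in> int_closure f"
    unfolding t_def w_def using shifted_quotient_in_int_closure[OF assms] .
  have "of_nat p * t = of_int_poly w" unfolding t_def using P by (simp add: of_nat_poly)
  then have pt: "of_nat p * t \<in> int_reps 3" unfolding int_reps_def int_coeffs_def w_def
    by (simp add: numeral_3_eq_3 coeff_pCons split: nat.split)
  have "coeff t 2 = 1 / of_nat p" unfolding t_def w_def by (simp add: numeral_2_eq_2)
  moreover have "(1 / of_nat p :: rat) \<notin> \<int>"
  proof
    assume "(1 / of_nat p :: rat) \<in> \<int>"
    then obtain z where "1 / of_nat p = (of_int z :: rat)" by (meson Ints_cases)
    then have "(of_int (int p * z) :: rat) = of_int 1" using P by (simp add: field_simps)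
    then have "int p * z = 1" by (simp only: of_int_eq_iff)
    then show False using p by (simp add: zmult_eq_1_iff)
  qed
  ultimately have "\<not> int_coeffs t" unfolding int_coeffs_def by metis
  then have "t \<notin> int_reps 3" unfolding int_reps_def by blast
  show ?thesis
  proof (cases "finite (coset (int_reps 3) ` int_closure f)")
    case True
    then show ?thesis
      unfolding ind_eq_card_cosets
      using prime_dvd_card_cosets[OF is_add_subgroup_int_reps[OF zero_less_numeral] p pt
          \<open>t \<notin> int_reps 3\<close> is_add_subgroup_int_closure int_reps_subset_int_closure t_closure] by simp
  qed (simp add: ind_eq_card_cosets)
qed

end

definition dedekind_criterion :: "nat \<Rightarrow> int \<Rightarrow> int \<Rightarrow> int \<Rightarrow> bool" where
  "dedekind_criterion p k A B \<longleftrightarrow>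
     (\<exists>r. int p ^ 2 dvd r^3 + k*r^2 + A*r + B \<and> int p dvd 3*r^2 + 2*k*r + A)"

lemma power_dvd_if_algebraic_int_quotient:
  assumes "algebraic_int (of_int c / of_nat n ^ m :: complex)" "n > 0"
  shows "int n ^ m dvd c"
proof -
  have "(of_int c / of_nat n ^ m :: complex) \<in> \<rat>"
    by (metis Rats_divide Rats_of_int Rats_of_nat Rats_power)
  with assms(1) have "(of_int c / of_nat n ^ m :: complex) \<in> \<int>"
    by (rule rational_algebraic_int_is_int)
  then obtain z where "(of_int c / of_nat n ^ m :: complex) = of_int z" by (meson Ints_cases)
  then have "(of_int c :: complex) = of_int (int n ^ m * z)" using assms(2) by (simp add: field_simps)
  then have "c = int n ^ m * z" by (simp only: of_int_eq_iff)
  then show ?thesis by simp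
qed

lemma inverse_mod_prime:
  fixes p :: nat and c :: int
  assumes "prime p" "\<not> int p dvd c"
  obtains \<beta> \<gamma> where "\<beta> * c = 1 + int p * \<gamma>"
proof -
  have "coprime (int p) c" using assms by (simp add: prime_imp_coprime)
  then obtain u v where "u * int p + v * c = 1" by (metis bezout_int coprime_iff_gcd_eq_1)
  then have "v * c = 1 + int p * (-u)" by (simp add: algebra_simps)
  then show ?thesis using that by blast
qed

text \<open>\<open>homogenize H c v = c^(deg H) H(v/c)\<close>.\<close>
definition homogenize :: "int poly \<Rightarrow> int \<Rightarrow> int poly \<Rightarrow> int poly" where
  "homogenize H c v = (\<Sum>j\<le>degree H. Polynomial.smult (coeff H j * c ^ (degree H - j)) (v ^ j))"

lemma homogenize_monic:
  assumes "monic H"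
  obtains R where "homogenize H c v = v ^ degree H + Polynomial.smult c R"
proof -
  define n where "n = degree H"
  define R where "R = (\<Sum>j<n. Polynomial.smult (coeff H j * c ^ (n - j - 1)) (v ^ j))"
  have "(\<Sum>j<n. Polynomial.smult (coeff H j * c ^ (n - j)) (v ^ j)) = Polynomial.smult c R"
    unfolding R_def smult_sum2
  proof (rule sum.cong[OF refl])
    fix j assume "j \<in> {..<n}"
    then have "c ^ (n - j) = c * c ^ (n - j - 1)" by (simp add: power_eq_if)
    then show "Polynomial.smult (coeff H j * c ^ (n - j)) (v ^ j)
        = Polynomial.smult c (Polynomial.smult (coeff H j * c ^ (n - j - 1)) (v ^ j))"
      by (simp add: mult_ac)
  qed
  moreover have "coeff H n = 1" using assms unfolding n_def by simp
  ultimately have "homogenize H c v = v ^ n + Polynomial.smult c R"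
    unfolding homogenize_def n_def[symmetric] by (simp add: lessThan_Suc_atMost[symmetric] add.commute)
  then show ?thesis using that unfolding n_def by blast
qed

lemma poly_homogenize:
  fixes a :: "'a::field_char_0"
  assumes "c \<noteq> 0"
  shows "poly (of_int_poly (homogenize H c v)) a
    = of_int c ^ degree H * poly (of_int_poly H) (poly (of_int_poly v) a / of_int c)"
proof -
  define n where "n = degree H"
  define x where "x = poly (of_int_poly v) a"
  have "poly (of_int_poly (homogenize H c v)) a = (\<Sum>j\<le>n. of_int (coeff H j) * of_int c ^ (n - j) * x ^ j)"
    unfolding homogenize_def n_def x_def
    by (simp add: of_int_poly_hom.hom_sum poly_sum hom_distribs of_int_poly_hom.hom_power)
  also have "\<dots> = of_int c ^ n * (\<Sum>j\<le>n. of_int (coeff H j) * (x / of_int c) ^ j)"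
    unfolding sum_distrib_left
  proof (rule sum.cong[OF refl])
    fix j assume "j \<in> {..n}"
    then have "(of_int c :: 'a) ^ n = of_int c ^ (n - j) * of_int c ^ j" by (simp add: power_add[symmetric])
    then show "of_int (coeff H j) * of_int c ^ (n - j) * x ^ j
        = of_int c ^ n * (of_int (coeff H j) * (x / of_int c) ^ j)"
      using assms by (simp add: power_divide field_simps)
  qed
  also have "(\<Sum>j\<le>n. of_int (coeff H j) * (x / of_int c) ^ j) = poly (of_int_poly H) (x / of_int c)"
    unfolding n_def by (simp add: poly_altdef degree_map_poly)
  finally show ?thesis unfolding n_def x_def .
qed

locale cubic_roots_prime = cubic_roots +
  fixes p :: nat
  assumes prime: "prime p"
begin

lemma p_pos: "p > 0"
  using prime by (simp add: prime_gt_0_nat)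

lemma dedekind_criterion_iff: "dedekind_criterion p k A B \<longleftrightarrow> (\<exists>r. int p ^ 2 dvd taylor0 r \<and> int p dvd taylor1 r)"
  unfolding dedekind_criterion_def taylor0_def taylor1_def ..

text \<open>An ideal of \<open>\<int>[x]\<close> containing \<open>p\<close> and \<open>f\<close>.\<close>
definition div_p_integral :: "int poly \<Rightarrow> bool" where
  "div_p_integral v \<longleftrightarrow> (\<forall>a\<in>root_set. algebraic_int (poly (of_int_poly v) a / of_nat p))"

lemma algebraic_int_poly_at_root:
  assumes "a \<in> root_set"
  shows "algebraic_int (poly (of_int_poly w) a)"
proof -
  have "integral_at_roots (of_int_poly w)"
    by (rule integral_at_roots_if_int_coeffs) (simp add: int_coeffs_def)
  then show ?thesis using assms unfolding integral_at_roots_def eval_rat_of_int_poly by blast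
qed

lemma div_p_integral_add: "div_p_integral v \<Longrightarrow> div_p_integral w \<Longrightarrow> div_p_integral (v + w)"
  unfolding div_p_integral_def by (auto simp: of_int_poly_hom.hom_add add_divide_distrib intro: algebraic_int_add)

lemma div_p_integral_mult:
  assumes "div_p_integral v"
  shows "div_p_integral (w * v)"
  unfolding div_p_integral_def
proof
  fix a assume a: "a \<in> root_set"
  have "poly (of_int_poly (w * v)) a / of_nat p = poly (of_int_poly w) a * (poly (of_int_poly v) a / of_nat p)"
    by (simp add: of_int_poly_hom.hom_mult)
  moreover have "algebraic_int (poly (of_int_poly v) a / of_nat p)"
    using assms a unfolding div_p_integral_def by blast
  ultimately show "algebraic_int (poly (of_int_poly (w * v)) a / of_nat p)"
    using algebraic_int_mult[OF algebraic_int_poly_at_root[OF a]] by metis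
qed

lemma div_p_integral_smult: "div_p_integral v \<Longrightarrow> div_p_integral (Polynomial.smult c v)"
  using div_p_integral_mult[of v "[:c:]"] by simp

lemma div_p_integral_diff: "div_p_integral v \<Longrightarrow> div_p_integral w \<Longrightarrow> div_p_integral (v - w)"
  using div_p_integral_add[of v "Polynomial.smult (-1) w"] div_p_integral_smult[of w "-1"] by simp

lemma div_p_integral_p: "div_p_integral (Polynomial.smult (int p) w)"
  unfolding div_p_integral_def using algebraic_int_poly_at_root p_pos by (simp add: hom_distribs)

lemma div_p_integral_f: "div_p_integral (f * w)"
proof -
  have "poly (of_int_poly (f * w)) a = 0" if "a \<in> root_set" for a
    using poly_f_root[OF that] by (simp only: of_int_poly_hom.hom_mult poly_mult mult_zero_left)
  then show ?thesis unfolding div_p_integral_def by simp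
qed

lemma div_p_integral_const:
  assumes "div_p_integral [:c:]"
  shows "int p dvd c"
proof -
  have "algebraic_int (poly (of_int_poly [:c:]) a1 / of_nat p)"
    using assms unfolding div_p_integral_def by blast
  then show ?thesis using power_dvd_if_algebraic_int_quotient[of c p 1] p_pos by (simp add: hom_distribs)
qed

lemma div_p_integral_cancel:
  assumes "div_p_integral (Polynomial.smult c v)" "\<not> int p dvd c"
  shows "div_p_integral v"
proof -
  obtain \<beta> \<gamma> where "\<beta> * c = 1 + int p * \<gamma>" using inverse_mod_prime[OF prime assms(2)] .
  then have "v = Polynomial.smult \<beta> (Polynomial.smult c v) - Polynomial.smult (int p) (Polynomial.smult \<gamma> v)"
    by (simp add: algebra_simps flip: smult_diff_left)
  then show ?thesis using div_p_integral_diff[OF div_p_integral_smult[OF assms(1)] div_p_integral_p] by metis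
qed

text \<open>Elements of the ideal are nilpotent modulo \<open>(f, p)\<close>: if \<open>H\<close> is monic of degree \<open>n\<close> and vanishes at
  all \<open>v(a)/p\<close>, then \<open>p^n H(v/p) \<equiv> v^n\<close> modulo \<open>p\<close> vanishes at the roots of \<open>f\<close>.\<close>
lemma div_p_integral_nilpotent:
  assumes "div_p_integral v"
  obtains n q R where "n \<ge> 1" "v ^ n = f * q + Polynomial.smult (int p) R"
proof -
  define P :: complex where "P = of_int (int p)"
  have P: "P \<noteq> 0" using p_pos unfolding P_def by simp
  obtain H where H: "monic H" "\<forall>x\<in>(\<lambda>a. poly (of_int_poly v) a / P) ` root_set. poly (of_int_poly H) x = 0"
    using algebraic_int_common_monic_poly[of "(\<lambda>a. poly (of_int_poly v) a / P) ` root_set"] assms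
    unfolding div_p_integral_def P_def by auto
  define n where "n = degree H"
  have "n \<ge> 1"
    using H monic_degree_0[of H] unfolding n_def by (cases "degree H = 0") auto
  obtain R where R: "homogenize H (int p) v = v ^ n + Polynomial.smult (int p) R"
    using homogenize_monic[OF H(1)] unfolding n_def by blast
  have "poly (of_int_poly (homogenize H (int p) v)) a = 0" if "a \<in> root_set" for a
    using H(2) that poly_homogenize[of "int p" H v a] p_pos unfolding P_def by auto
  then obtain q where "homogenize H (int p) v = f * q" using f_dvd_if_roots by blast
  then have "v ^ n = f * q + Polynomial.smult (int p) (- R)" using R by (simp add: algebra_simps)
  with \<open>n \<ge> 1\<close> show ?thesis using that by blast
qed

lemma div_p_integral_root_mod_p:
  assumes "div_p_integral v" "int p dvd taylor0 l"
  shows "int p dvd poly v l"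
proof -
  obtain n q R where "n \<ge> 1" and vn: "v ^ n = f * q + Polynomial.smult (int p) R"
    using div_p_integral_nilpotent[OF assms(1)] .
  have "poly v l ^ n = poly f l * poly q l + int p * poly R l"
    using vn by (metis poly_power poly_mult poly_add poly_smult)
  moreover have "poly f l = taylor0 l"
    unfolding taylor0_def by (simp add: algebra_simps power2_eq_square power3_eq_cube)
  ultimately have "int p dvd poly v l ^ n" using assms(2) by simp
  moreover have "prime (int p)" using prime by simp
  ultimately show ?thesis using prime_dvd_power by blast
qed


lemma taylor_vieta:
  fixes l :: int
  shows "of_int (taylor1 l) = (a1 - of_int l) * (a2 - of_int l) + (a1 - of_int l) * (a3 - of_int l)
      + (a2 - of_int l) * (a3 - of_int l)"
    and "of_int (- taylor0 l) = (a1 - of_int l) * (a2 - of_int l) * (a3 - of_int l)"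
proof -
  have "of_int (taylor1 l) = 3 * of_int l ^ 2 + 2 * of_int k * of_int l + (of_int A :: complex)"
    by (simp add: taylor1_def)
  then show "of_int (taylor1 l) = (a1 - of_int l) * (a2 - of_int l) + (a1 - of_int l) * (a3 - of_int l)
      + (a2 - of_int l) * (a3 - of_int l)"
    unfolding vieta by (simp add: algebra_simps power2_eq_square)
  have "of_int (- taylor0 l) = - (of_int l ^ 3 + of_int k * of_int l ^ 2 + of_int A * of_int l + (of_int B :: complex))"
    by (simp add: taylor0_def)
  then show "of_int (- taylor0 l) = (a1 - of_int l) * (a2 - of_int l) * (a3 - of_int l)"
    unfolding vieta by (simp add: algebra_simps power2_eq_square power3_eq_cube)
qed

text \<open>If \<open>(x - l)/p\<close> is integral, so are the elementary symmetric functions of the \<open>(a_i - l)/p\<close>.\<close>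
lemma criterion_if_linear_div_p_integral:
  assumes "div_p_integral [:-l, 1:]"
  shows "int p ^ 2 dvd taylor0 l" and "int p dvd taylor1 l"
proof -
  define P :: complex where "P = of_nat p"
  define z where "z a = (a - of_int l) / P" for a
  have P: "P \<noteq> 0" using p_pos unfolding P_def by simp
  have z: "algebraic_int (z a)" if "a \<in> root_set" for a
    using assms that unfolding div_p_integral_def z_def P_def by (auto simp: hom_distribs)
  have "of_int (taylor1 l) / P ^ 2 = z a1 * z a2 + z a1 * z a3 + z a2 * z a3"
    unfolding taylor_vieta z_def using P by (simp add: field_simps power2_eq_square)
  also have "algebraic_int \<dots>" using z by (intro algebraic_int_add algebraic_int_mult) auto
  finally have "int p ^ 2 dvd taylor1 l"
    using power_dvd_if_algebraic_int_quotient p_pos unfolding P_def by blast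
  moreover have "int p dvd int p ^ 2" by (simp add: power2_eq_square)
  ultimately show "int p dvd taylor1 l" by (metis dvd_trans)
  have "of_int (- taylor0 l) / P ^ 3 = z a1 * z a2 * z a3"
    unfolding taylor_vieta z_def using P by (simp add: field_simps power3_eq_cube)
  also have "algebraic_int \<dots>" using z by (intro algebraic_int_mult) auto
  finally have "int p ^ 3 dvd - taylor0 l"
    using power_dvd_if_algebraic_int_quotient p_pos unfolding P_def by blast
  moreover have "int p ^ 2 dvd int p ^ 3" by (rule le_imp_power_dvd) simp
  ultimately show "int p ^ 2 dvd taylor0 l" by (metis dvd_trans dvd_minus_iff)
qed

text \<open>With \<open>U = (x - l)(x - l + f''(l)/2)\<close>, the cubic relation gives
  \<open>f(l) (x - l + f''(l)/2) = -(U^2 + f'(l) U)\<close> modulo \<open>f\<close>.\<close>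
lemma div_p_integral_taylor_factor:
  assumes c0: "taylor0 l = int p * c0" and c1: "taylor1 l = int p * c1"
    and J: "div_p_integral ([:-l, 1:] * [:taylor2 l - l, 1:])"
  shows "div_p_integral (Polynomial.smult c0 [:taylor2 l - l, 1:])"
  unfolding div_p_integral_def
proof
  fix a assume a: "a \<in> root_set"
  define P :: complex where "P = of_nat p"
  have P: "P \<noteq> 0" unfolding P_def using p_pos by simp
  define Y where "Y = a - of_int l"
  define U where "U = Y^2 + of_int (taylor2 l) * Y"
  have "algebraic_int (U / P)"
    using J a unfolding div_p_integral_def U_def Y_def P_def
    by (auto simp: of_int_poly_hom.hom_mult hom_distribs power2_eq_square algebra_simps)
  have rel: "U^2 + of_int (taylor1 l) * U + of_int (taylor0 l) * of_int (taylor2 l) = - (of_int (taylor0 l) * Y)"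
    using cubic_root_quadratic_relation(2)[OF taylor_root_equation[OF a]] unfolding U_def Y_def .
  have pv: "poly (of_int_poly (Polynomial.smult c0 [:taylor2 l - l, 1:])) a = of_int c0 * (Y + of_int (taylor2 l))"
    unfolding Y_def by (simp add: hom_distribs algebra_simps)
  have "U^2 + P * of_int c1 * U + P * (of_int c0 * (Y + of_int (taylor2 l))) = 0"
    using rel unfolding c0 c1 P_def by (simp add: algebra_simps eq_neg_iff_add_eq_0)
  then have E: "- (U^2 + P * of_int c1 * U) = P * (of_int c0 * (Y + of_int (taylor2 l)))"
    unfolding neg_eq_iff_add_eq_0 .
  have "- ((U / P)^2 + of_int c1 * (U / P)) = - (U^2 + P * of_int c1 * U) / P^2"
    using P by (simp add: field_simps power2_eq_square)
  also have "\<dots> = poly (of_int_poly (Polynomial.smult c0 [:taylor2 l - l, 1:])) a / P"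
    unfolding E pv using P by (simp add: power2_eq_square)
  finally have "poly (of_int_poly (Polynomial.smult c0 [:taylor2 l - l, 1:])) a / P
      = - ((U / P)^2 + of_int c1 * (U / P))" ..
  also have "algebraic_int \<dots>"
    using \<open>algebraic_int (U / P)\<close> by (intro algebraic_int_minus algebraic_int_add algebraic_int_mult algebraic_int_power) auto
  finally show "algebraic_int (poly (of_int_poly (Polynomial.smult c0 [:taylor2 l - l, 1:])) a / of_nat p)"
    unfolding P_def .
qed

lemma criterion_if_quadratic_div_p_integral:
  assumes "int p dvd taylor0 l" "int p dvd taylor1 l"
    and J: "div_p_integral ([:-l, 1:] * [:taylor2 l - l, 1:])"
  shows "int p ^ 2 dvd taylor0 l"
proof (rule ccontr)
  assume not_sq: "\<not> int p ^ 2 dvd taylor0 l"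
  obtain c0 where c0: "taylor0 l = int p * c0" using assms(1) by blast
  obtain c1 where c1: "taylor1 l = int p * c1" using assms(2) by blast
  define v where "v = [:taylor2 l - l, 1:]"
  have "\<not> int p dvd c0" using not_sq c0 by (auto simp: power2_eq_square)
  with div_p_integral_taylor_factor[OF c0 c1 J] have Jv: "div_p_integral v"
    unfolding v_def by (rule div_p_integral_cancel)
  have "int p dvd poly v l" using div_p_integral_root_mod_p[OF Jv assms(1)] .
  then obtain m where "taylor2 l = int p * m" unfolding v_def by (auto elim!: dvdE)
  then have "[:-l, 1:] = v - Polynomial.smult (int p) [:m:]" unfolding v_def by simp
  then have "div_p_integral [:-l, 1:]" using div_p_integral_diff[OF Jv div_p_integral_p] by metis
  then show False using criterion_if_linear_div_p_integral(1) not_sq by blast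
qed

lemma linear_div_p_integral_dvd:
  assumes nC: "\<not> dedekind_criterion p k A B" and J: "div_p_integral [:c, d:]"
  shows "int p dvd c" "int p dvd d"
proof -
  show d: "int p dvd d"
  proof (rule ccontr)
    assume "\<not> int p dvd d"
    then obtain \<beta> \<gamma> where \<beta>: "\<beta> * d = 1 + int p * \<gamma>" using inverse_mod_prime[OF prime] by blast
    have "[:-(-\<beta> * c), 1:] = Polynomial.smult \<beta> [:c, d:] - Polynomial.smult (int p) [:0, \<gamma>:]"
      using \<beta> by simp
    then have "div_p_integral [:-(-\<beta> * c), 1:]"
      using div_p_integral_diff[OF div_p_integral_smult[OF J] div_p_integral_p] by metis
    then show False using nC criterion_if_linear_div_p_integral unfolding dedekind_criterion_iff by blast
  qed
  then obtain m where "d = int p * m" by blast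
  then have "[:c:] = [:c, d:] - Polynomial.smult (int p) [:0, m:]" by simp
  then have "div_p_integral [:c:]" using div_p_integral_diff[OF J div_p_integral_p] by metis
  then show "int p dvd c" by (rule div_p_integral_const)
qed

text \<open>A monic quadratic \<open>c = x^2 + c1 x + c0\<close> in the ideal would be, modulo \<open>p\<close>, the square-like factor
  \<open>(x - l)(x - l + f''(l)/2)\<close> of \<open>f\<close> at \<open>l = c1 - k\<close>, since \<open>x c - l c - f\<close> is linear.\<close>
lemma monic_quadratic_not_div_p_integral:
  assumes nC: "\<not> dedekind_criterion p k A B"
  shows "\<not> div_p_integral [:c0, c1, 1:]"
proof
  assume Jc: "div_p_integral [:c0, c1, 1:]"
  define l where "l = c1 - k"
  have "[:0, 1:] * [:c0, c1, 1:] - Polynomial.smult l [:c0, c1, 1:] - f * 1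
      = [:- l * c0 - B, c0 - l * c1 - A:]"
    unfolding l_def by (simp add: algebra_simps)
  moreover have "div_p_integral ([:0, 1:] * [:c0, c1, 1:] - Polynomial.smult l [:c0, c1, 1:] - f * 1)"
    using Jc by (intro div_p_integral_diff div_p_integral_mult div_p_integral_smult div_p_integral_f)
  ultimately have z: "int p dvd - l * c0 - B" "int p dvd c0 - l * c1 - A"
    using linear_div_p_integral_dvd[OF nC] by metis+
  have "taylor0 l = - ((- l * c0 - B) + (c0 - l * c1 - A) * l)"
    unfolding taylor0_def l_def by (simp add: algebra_simps power2_eq_square power3_eq_cube)
  moreover have "int p dvd - ((- l * c0 - B) + (c0 - l * c1 - A) * l)"
    using z by (intro dvd_minus_iff[THEN iffD2] dvd_add dvd_mult2)
  ultimately have d0: "int p dvd taylor0 l" by simp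
  have "int p dvd poly [:c0, c1, 1:] l" using div_p_integral_root_mod_p[OF Jc d0] .
  then have pc: "int p dvd c0 + c1 * l + l^2" by (simp add: algebra_simps power2_eq_square)
  have "taylor1 l = (c0 + c1 * l + l^2) - (c0 - l * c1 - A)"
    unfolding taylor1_def l_def by (simp add: algebra_simps power2_eq_square)
  moreover have "int p dvd (c0 + c1 * l + l^2) - (c0 - l * c1 - A)" using pc z(2) by (rule dvd_diff)
  ultimately have d1: "int p dvd taylor1 l" by simp
  obtain m where m: "c0 + c1 * l + l^2 = int p * m" using pc by blast
  have "[:-l, 1:] * [:taylor2 l - l, 1:] = [:c0, c1, 1:] - Polynomial.smult (int p) [:m:]"
    using m unfolding taylor2_def l_def by (simp add: algebra_simps power2_eq_square)
  then have "div_p_integral ([:-l, 1:] * [:taylor2 l - l, 1:])"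
    using div_p_integral_diff[OF Jc div_p_integral_p] by metis
  then have "int p ^ 2 dvd taylor0 l" using criterion_if_quadratic_div_p_integral d0 d1 by blast
  then show False using nC d1 unfolding dedekind_criterion_iff by blast
qed

lemma div_p_integral_low_degree_dvd:
  assumes nC: "\<not> dedekind_criterion p k A B" and J: "div_p_integral u" and deg: "degree u < 3"
  shows "int p dvd coeff u i"
proof -
  define u0 u1 u2 where "u0 = coeff u 0" and "u1 = coeff u 1" and "u2 = coeff u 2"
  have u: "u = [:u0, u1, u2:]" unfolding u0_def u1_def u2_def by (rule poly_eq_pCons3[OF deg])
  have d2: "int p dvd u2"
  proof (rule ccontr)
    assume "\<not> int p dvd u2"
    then obtain \<beta> \<gamma> where \<beta>: "\<beta> * u2 = 1 + int p * \<gamma>" using inverse_mod_prime[OF prime] by blast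
    have "[:\<beta> * u0, \<beta> * u1, 1:] = Polynomial.smult \<beta> u - Polynomial.smult (int p) [:0, 0, \<gamma>:]"
      unfolding u using \<beta> by simp
    then have "div_p_integral [:\<beta> * u0, \<beta> * u1, 1:]"
      using div_p_integral_diff[OF div_p_integral_smult[OF J] div_p_integral_p] by metis
    then show False using monic_quadratic_not_div_p_integral[OF nC] by blast
  qed
  then obtain m where "u2 = int p * m" by blast
  then have "[:u0, u1:] = u - Polynomial.smult (int p) [:0, 0, m:]" unfolding u by simp
  then have "div_p_integral [:u0, u1:]" using div_p_integral_diff[OF J div_p_integral_p] by metis
  then have "int p dvd u0" "int p dvd u1" using linear_div_p_integral_dvd[OF nC] by blast+
  show ?thesis
  proof (cases "i < 3")
    case True
    then have "i = 0 \<or> i = 1 \<or> i = 2" by auto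
    then show ?thesis using d2 \<open>int p dvd u0\<close> \<open>int p dvd u1\<close> unfolding u0_def u1_def u2_def by auto
  qed (use deg in \<open>simp add: coeff_eq_0\<close>)
qed

end

lemma int_coeffs_imp_of_int_poly:
  assumes "int_coeffs g"
  obtains u where "g = of_int_poly u"
proof
  show "g = of_int_poly (map_poly floor g)"
  proof (rule poly_eqI)
    fix n
    obtain z where "coeff g n = of_int z" using assms unfolding int_coeffs_def by (meson Ints_cases)
    then show "coeff g n = coeff (of_int_poly (map_poly floor g)) n" by (simp add: coeff_map_poly)
  qed
qed

context cubic_roots_prime
begin

lemma int_coeffs_if_int_coeffs_p_mult:
  assumes nC: "\<not> dedekind_criterion p k A B"
    and g: "g \<in> int_closure f" and pg: "int_coeffs (Polynomial.smult (of_nat p) g)"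
  shows "int_coeffs g"
proof -
  obtain u where u: "Polynomial.smult (of_nat p) g = of_int_poly u"
    using pg by (rule int_coeffs_imp_of_int_poly)
  have deg: "degree g < 3" and int: "integral_at_roots g" using g unfolding mem_int_closure_iff by auto
  have deg_u: "degree u < 3"
    using deg degree_smult_le[of "of_nat p" g] unfolding u by simp
  have J: "div_p_integral u"
    unfolding div_p_integral_def
  proof
    fix a assume a: "a \<in> root_set"
    have "poly (of_int_poly u) a = of_nat p * eval_rat g a"
      by (simp flip: eval_rat_of_int_poly u add: eval_rat_smult)
    then have "poly (of_int_poly u) a / of_nat p = eval_rat g a" using p_pos by simp
    then show "algebraic_int (poly (of_int_poly u) a / of_nat p)"
      using int a unfolding integral_at_roots_def by auto
  qed
  have "int p dvd coeff u i" for i using div_p_integral_low_degree_dvd[OF nC J deg_u] .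
  show ?thesis unfolding int_coeffs_def
  proof
    fix i
    obtain t where t: "coeff u i = int p * t" using \<open>int p dvd coeff u i\<close> by blast
    have "of_nat p * coeff g i = of_int (coeff u i)" using arg_cong[OF u, of "\<lambda>h. coeff h i"] by simp
    then have "coeff g i = of_int t" using p_pos t by simp
    then show "coeff g i \<in> \<int>" by simp
  qed
qed

lemma int_closure_subset_frac_reps:
  assumes nC: "\<not> dedekind_criterion p k A B" and em: "nat \<bar>cubic_disc k A B\<bar> = p ^ e * m"
  shows "int_closure f \<subseteq> frac_reps m 3"
proof
  fix g assume g: "g \<in> int_closure f"
  have "int_coeffs (Polynomial.smult (of_nat (p ^ e * m)) g)"
    unfolding int_coeffs_def em[symmetric]
  proof
    fix i
    have "of_int (cubic_disc k A B) * coeff g i \<in> \<int>" using disc_mult_coeff_int_closure[OF g] .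
    then have "of_int \<bar>cubic_disc k A B\<bar> * coeff g i \<in> \<int>"
      by (cases "cubic_disc k A B \<ge> 0") (simp_all add: Ints_minus[of "_ * _", simplified])
    then show "coeff (Polynomial.smult (of_nat (nat \<bar>cubic_disc k A B\<bar>)) g) i \<in> \<int>" by simp
  qed
  moreover have "int_coeffs (Polynomial.smult (of_nat m) g)"
    if "int_coeffs (Polynomial.smult (of_nat (p ^ j * m)) g)" for j
    using that
  proof (induction j)
    case (Suc j)
    let ?h = "Polynomial.smult (of_nat (p ^ j * m)) g"
    have "?h \<in> int_closure f"
      using g integral_at_roots_int_smult[of g "int (p ^ j * m)"] degree_smult_le[of _ g]
      unfolding mem_int_closure_iff by (auto intro: le_less_trans)
    moreover have "int_coeffs (Polynomial.smult (of_nat p) ?h)" using Suc.prems by (simp add: mult_ac)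
    ultimately show ?case using Suc.IH int_coeffs_if_int_coeffs_p_mult[OF nC] by blast
  qed simp
  ultimately show "g \<in> frac_reps m 3" using g unfolding frac_reps_def mem_int_closure_iff by blast
qed

text \<open>If the criterion fails, the index divides \<open>m^3\<close> where \<open>m\<close> is the prime-to-\<open>p\<close> part of the
  discriminant.\<close>
lemma not_dvd_ind_if_not_criterion:
  assumes nC: "\<not> dedekind_criterion p k A B"
  shows "\<not> p dvd ind f"
proof -
  have "nat \<bar>cubic_disc k A B\<bar> \<noteq> 0" using disc_nonzero by simp
  moreover have "\<not> is_unit p" using prime not_prime_unit by blast
  ultimately obtain m where em: "nat \<bar>cubic_disc k A B\<bar> = p ^ multiplicity p (nat \<bar>cubic_disc k A B\<bar>) * m"
    and "\<not> p dvd m" by (rule multiplicity_decompose')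
  then have "m > 0" using \<open>nat \<bar>cubic_disc k A B\<bar> \<noteq> 0\<close> by (cases "m = 0") auto
  have card: "card (coset (int_reps 3) ` frac_reps m 3) = m ^ 3"
    using card_cosets_frac_reps[OF \<open>m > 0\<close>] by simp
  have "ind f dvd m ^ 3"
    unfolding ind_eq_card_cosets card[symmetric]
  proof (rule card_cosets_dvd)
    show "int_closure f \<subseteq> frac_reps m 3" using int_closure_subset_frac_reps[OF nC em] .
    show "finite (coset (int_reps 3) ` frac_reps m 3)"
      using card \<open>m > 0\<close> by (intro card_ge_0_finite) simp
  qed (simp_all add: is_add_subgroup_int_reps is_add_subgroup_int_closure is_add_subgroup_frac_reps
      int_reps_subset_int_closure)
  moreover have "\<not> p dvd m ^ 3" using \<open>\<not> p dvd m\<close> prime by (simp add: prime_dvd_power_iff)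
  ultimately show ?thesis using dvd_trans by blast
qed

end

theorem ind_dvd_iff_dedekind_criterion:
  assumes "prime p" "cubic_disc k A B \<noteq> 0"
  shows "p dvd ind [:B, A, k, 1:] \<longleftrightarrow> dedekind_criterion p k A B"
proof -
  obtain a1 a2 a3 where roots: "cubic_roots k A B a1 a2 a3" using cubic_roots_exist[OF assms(2)] .
  interpret cubic_roots_prime k A B a1 a2 a3 p
    using roots assms(1) by (simp add: cubic_roots_prime_def cubic_roots_prime_axioms_def)
  show ?thesis
    using dvd_ind_if_criterion[OF assms(1)] not_dvd_ind_if_not_criterion
    unfolding dedekind_criterion_iff by blast
qed

section \<open>Counting residue classes of the constant term\<close>

lemma dedekind_criterion_cong:
  assumes "[B = b] (mod int p ^ 2)"
  shows "dedekind_criterion p k A B \<longleftrightarrow> dedekind_criterion p k A b"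
proof -
  have "int p ^ 2 dvd B - b" using assms by (simp add: cong_iff_dvd_diff)
  then obtain t where "B - b = int p ^ 2 * t" by (elim dvdE)
  then have "r^3 + k*r^2 + A*r + B = (r^3 + k*r^2 + A*r + b) + int p ^ 2 * t" for r
    by (simp add: algebra_simps)
  then have "int p ^ 2 dvd r^3 + k*r^2 + A*r + B \<longleftrightarrow> int p ^ 2 dvd r^3 + k*r^2 + A*r + b" for r
    by (metis dvd_add_left_iff dvd_triv_left)
  then show ?thesis unfolding dedekind_criterion_def by simp
qed

text \<open>\<open>cubic_disc k A B\<close> is a quadratic polynomial in \<open>B\<close> with second difference \<open>-54 s^2\<close>.\<close>
lemma exists_lift_disc_nonzero:
  fixes s :: int
  assumes "s \<noteq> 0"
  shows "\<exists>j\<in>{0, 1, 2}. cubic_disc k A (b + j * s) \<noteq> 0"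
proof (rule ccontr)
  assume "\<not> ?thesis"
  then have "cubic_disc k A b - 2 * cubic_disc k A (b + s) + cubic_disc k A (b + 2 * s) = 0" by auto
  moreover have "cubic_disc k A b - 2 * cubic_disc k A (b + s) + cubic_disc k A (b + 2 * s) = -54 * s^2"
    unfolding cubic_disc_def by (simp add: algebra_simps power2_eq_square)
  ultimately show False using assms by simp
qed

lemma dvd_ind_for_all_lifts_iff:
  assumes "prime p"
  shows "(\<forall>B. [B = b] (mod int p ^ 2) \<and> cubic_disc k A B \<noteq> 0 \<longrightarrow> p dvd ind [:B, A, k, 1:])
    \<longleftrightarrow> dedekind_criterion p k A b"
proof
  assume all: "\<forall>B. [B = b] (mod int p ^ 2) \<and> cubic_disc k A B \<noteq> 0 \<longrightarrow> p dvd ind [:B, A, k, 1:]"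
  have "int p ^ 2 \<noteq> 0" using assms by (simp add: prime_gt_0_nat)
  then obtain j where "cubic_disc k A (b + j * int p ^ 2) \<noteq> 0"
    using exists_lift_disc_nonzero by blast
  moreover have cong: "[b + j * int p ^ 2 = b] (mod int p ^ 2)" by (simp add: cong_iff_dvd_diff)
  ultimately have "p dvd ind [:b + j * int p ^ 2, A, k, 1:]" using all by blast
  then have "dedekind_criterion p k A (b + j * int p ^ 2)"
    using ind_dvd_iff_dedekind_criterion[OF assms \<open>cubic_disc k A (b + j * int p ^ 2) \<noteq> 0\<close>] by blast
  then show "dedekind_criterion p k A b" using dedekind_criterion_cong[OF cong] by blast
next
  assume crit: "dedekind_criterion p k A b"
  show "\<forall>B. [B = b] (mod int p ^ 2) \<and> cubic_disc k A B \<noteq> 0 \<longrightarrow> p dvd ind [:B, A, k, 1:]"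
  proof (intro allI impI, elim conjE)
    fix B assume cong: "[B = b] (mod int p ^ 2)" and disc: "cubic_disc k A B \<noteq> 0"
    have "dedekind_criterion p k A B" using crit dedekind_criterion_cong[OF cong] by simp
    then show "p dvd ind [:B, A, k, 1:]" using ind_dvd_iff_dedekind_criterion[OF assms disc] by simp
  qed
qed

lemma cubic_value_cong_sq:
  fixes P x t :: int
  assumes "P dvd 3*x^2 + 2*k*x + A"
  shows "P^2 dvd (x + P*t)^3 + k*(x + P*t)^2 + A*(x + P*t) - (x^3 + k*x^2 + A*x)"
    and "P dvd 3*(x + P*t)^2 + 2*k*(x + P*t) + A"
proof -
  obtain w where w: "3*x^2 + 2*k*x + A = P * w" using assms by blast
  have "(x + P*t)^3 + k*(x + P*t)^2 + A*(x + P*t) - (x^3 + k*x^2 + A*x)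
      = P^2 * (t * t * (3*x + P*t + k)) + P * t * (3*x^2 + 2*k*x + A)"
    by (simp add: algebra_simps power2_eq_square power3_eq_cube)
  also have "\<dots> = P^2 * (t * (t * (3*x + P*t + k) + w))"
    unfolding w by (simp add: algebra_simps power2_eq_square)
  finally show "P^2 dvd (x + P*t)^3 + k*(x + P*t)^2 + A*(x + P*t) - (x^3 + k*x^2 + A*x)" by simp
  have "3*(x + P*t)^2 + 2*k*(x + P*t) + A = (3*x^2 + 2*k*x + A) + P * (t * (6*x + 3*P*t + 2*k))"
    by (simp add: algebra_simps power2_eq_square)
  also have "\<dots> = P * (w + t * (6*x + 3*P*t + 2*k))"
    unfolding w by (simp add: algebra_simps)
  finally show "P dvd 3*(x + P*t)^2 + 2*k*(x + P*t) + A" by simp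
qed

text \<open>Two distinct roots \<open>x, y\<close> of \<open>f'\<close> modulo a prime satisfy \<open>x + 2y + k = 0 = 2x + y + k\<close> whenever
  \<open>f(x) = f(y)\<close>, which forces \<open>x = y\<close>.\<close>
lemma cubic_value_inj_on_derivative_roots:
  fixes P x y :: int
  assumes P: "prime P" and x: "P dvd 3*x^2 + 2*k*x + A" and y: "P dvd 3*y^2 + 2*k*y + A"
    and xy: "P dvd (x^3 + k*x^2 + A*x) - (y^3 + k*y^2 + A*y)"
  shows "P dvd x - y"
proof (rule ccontr)
  assume nd: "\<not> P dvd x - y"
  then have nd': "\<not> P dvd y - x" by (simp add: dvd_diff_commute)
  define Q where "Q = x^2 + x*y + y^2 + k*(x + y) + A"
  have "(x^3 + k*x^2 + A*x) - (y^3 + k*y^2 + A*y) = (x - y) * Q"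
    unfolding Q_def by (simp add: algebra_simps power2_eq_square power3_eq_cube)
  then have "P dvd Q" using xy nd P by (simp add: prime_dvd_mult_iff)
  have "Q - (3*x^2 + 2*k*x + A) = (y - x) * (y + 2*x + k)"
    unfolding Q_def by (simp add: algebra_simps power2_eq_square)
  then have "P dvd (y - x) * (y + 2*x + k)" using \<open>P dvd Q\<close> x by (metis dvd_diff)
  then have a: "P dvd y + 2*x + k" using nd' P by (simp add: prime_dvd_mult_iff)
  have "Q - (3*y^2 + 2*k*y + A) = (x - y) * (x + 2*y + k)"
    unfolding Q_def by (simp add: algebra_simps power2_eq_square)
  then have "P dvd (x - y) * (x + 2*y + k)" using \<open>P dvd Q\<close> y by (metis dvd_diff)
  then have b: "P dvd x + 2*y + k" using nd P by (simp add: prime_dvd_mult_iff)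
  have "(y + 2*x + k) - (x + 2*y + k) = x - y" by simp
  then show False using dvd_diff[OF a b] nd by simp
qed

lemma dedekind_criterion_iff_residue:
  assumes "p > 0"
  shows "dedekind_criterion p k A b \<longleftrightarrow>
    (\<exists>x\<in>{0..<int p}. int p dvd 3*x^2 + 2*k*x + A \<and> int p ^ 2 dvd x^3 + k*x^2 + A*x + b)"
proof
  assume "dedekind_criterion p k A b"
  then obtain r where r: "int p ^ 2 dvd r^3 + k*r^2 + A*r + b" "int p dvd 3*r^2 + 2*k*r + A"
    unfolding dedekind_criterion_def by blast
  define x where "x = r mod int p"
  have eq: "x + int p * (r div int p) = r" "r + int p * (- (r div int p)) = x"
    unfolding x_def by (simp_all add: minus_mult_div_eq_mod[symmetric])
  have dx: "int p dvd 3*x^2 + 2*k*x + A"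
    using cubic_value_cong_sq(2)[OF r(2), of "- (r div int p)"] unfolding eq .
  have "int p ^ 2 dvd r^3 + k*r^2 + A*r - (x^3 + k*x^2 + A*x)"
    using cubic_value_cong_sq(1)[OF dx, of "r div int p"] unfolding eq .
  with r(1) have "int p ^ 2 dvd (r^3 + k*r^2 + A*r + b) - (r^3 + k*r^2 + A*r - (x^3 + k*x^2 + A*x))"
    by (rule dvd_diff)
  then have "int p ^ 2 dvd x^3 + k*x^2 + A*x + b" by (simp add: algebra_simps)
  moreover have "x \<in> {0..<int p}" unfolding x_def using assms by simp
  ultimately show "\<exists>x\<in>{0..<int p}. int p dvd 3*x^2 + 2*k*x + A \<and> int p ^ 2 dvd x^3 + k*x^2 + A*x + b"
    using dx by blast
qed (auto simp: dedekind_criterion_def)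

lemma card_dedekind_criterion_residues:
  assumes p: "prime p"
  shows "card {b \<in> {0..<int p ^ 2}. dedekind_criterion p k A b}
    = card {x \<in> {0..<int p}. [3 * x^2 + 2 * k * x + A = 0] (mod int p)}"
proof -
  define P where "P = int p"
  have P: "prime P" "P > 1" unfolding P_def using p prime_gt_1_nat by auto
  define F where "F x = x^3 + k*x^2 + A*x" for x
  define R where "R = {x \<in> {0..<P}. P dvd 3*x^2 + 2*k*x + A}"
  define L where "L = {b \<in> {0..<P^2}. dedekind_criterion p k A b}"
  have crit: "dedekind_criterion p k A b \<longleftrightarrow> (\<exists>x\<in>R. P^2 dvd F x + b)" for b
    unfolding dedekind_criterion_iff_residue[OF prime_gt_0_nat[OF p]] R_def F_def P_def
    by (auto simp: add.assoc)
  have "bij_betw (\<lambda>x. (- F x) mod P^2) R L"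
  proof (rule bij_betw_imageI)
    show "inj_on (\<lambda>x. (- F x) mod P^2) R"
    proof (rule inj_onI)
      fix x y assume x: "x \<in> R" and y: "y \<in> R" and eq: "(- F x) mod P^2 = (- F y) mod P^2"
      have "P^2 dvd (- F x) - (- F y)" using eq by (simp only: mod_eq_dvd_iff)
      then have "P^2 dvd F y - F x" by simp
      then have "P dvd F y - F x" by (rule dvd_trans[rotated]) (simp add: power2_eq_square)
      then have "P dvd y - x"
        using cubic_value_inj_on_derivative_roots[OF P(1)] x y unfolding R_def F_def by blast
      with x y show "x = y" unfolding R_def
        by (metis (no_types, lifting) atLeastLessThan_iff mem_Collect_eq mod_eq_dvd_iff mod_pos_pos_trivial)
    qed
    show "(\<lambda>x. (- F x) mod P^2) ` R = L"
    proof (intro equalityI subsetI)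
      fix b assume "b \<in> (\<lambda>x. (- F x) mod P^2) ` R"
      then obtain x where x: "x \<in> R" "b = (- F x) mod P^2" by blast
      have "P^2 dvd F x + b" unfolding x(2) dvd_eq_mod_eq_0 by (simp add: mod_add_right_eq)
      then have "dedekind_criterion p k A b" unfolding crit using x(1) by blast
      moreover have "b \<in> {0..<P^2}" unfolding x(2) using P(2) by simp
      ultimately show "b \<in> L" unfolding L_def by blast
    next
      fix b assume "b \<in> L"
      then obtain x where x: "x \<in> R" "P^2 dvd F x + b" and "b \<in> {0..<P^2}"
        unfolding L_def crit by blast
      from x(2) have "b mod P^2 = (- F x) mod P^2" by (simp add: mod_eq_dvd_iff add.commute)
      then have "b = (- F x) mod P^2" using \<open>b \<in> {0..<P^2}\<close> by simp
      then show "b \<in> (\<lambda>x. (- F x) mod P^2) ` R" using x(1) by blast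
    qed
  qed
  then have "card R = card L" by (rule bij_betw_same_card)
  then show ?thesis unfolding L_def R_def P_def cong_0_iff by simp
qed

theorem corollary3:
  fixes p :: nat and k A :: int
  assumes "prime p"
  shows "card {b \<in> {0..<int p ^ 2}. \<forall>B::int. [B = b] (mod int p ^ 2) \<and> cubic_disc k A B \<noteq> 0
                 \<longrightarrow> p dvd ind [:B, A, k, 1:]}
       = card {x \<in> {0..<int p}. [3 * x^2 + 2 * k * x + A = 0] (mod int p)}"
  unfolding dvd_ind_for_all_lifts_iff[OF assms] by (rule card_dedekind_criterion_residues[OF assms])

end
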